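(* In the discrete-time setting described in the context: (i) the mapping $g:\prod_{k=0}^NX_k\times\prod_{k=0}^{N-1}(L^2_{\mathcal F_k})^m\to\prod_{k=0}^NX_k$ is Lipschitz and Gâteaux differentiable, and for $(x,u),(z,v)$ its Gâteaux derivative $Dg(x,u)(z,v)=(Dg_0(x,u)(z,v),\dots,Dg_N(x,u)(z,v))$ is given by $Dg_0(x,u)(z,v)=-z_0$ and, for $k=0,\dots,N-1$, $$Dg_{k+1}(x,u)(z,v)=b_{(x,u)}(k,x_k,u_k)(z_k,v_k)+\sum_{i=1}^d\sigma^i_{(x,u)}(k,x_k,u_k)(z_k,v_k)\,w_{k+1}^i-z_{k+1};$$ (ii) the mapping $f$ is locally Lipschitz and Gâteaux differentiable with $$Df(x,u)(z,v)=\mathbb E\Big(\sum_{k=0}^{N-1}\ell_{(x,u)}(k,x_k,u_k)(z_k,v_k)+D\Phi(x_N)z_N\Big).$$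
   Context: $(\Omega,\mathcal F,\mathbb P)$ is a probability space; $w_1,\dots,w_N$ are independent $\mathbb R^d$-valued random variables, each with independent coordinates satisfying $\mathbb E(w_k^i)=0$, $\mathbb E|w_k^i|^2=1$; $w_0:=0$, $\mathcal F_k=\sigma(w_0,\dots,w_k)$, $L^2_{\mathcal F_k}$ the $\mathcal F_k$-measurable square-integrable random variables. $X_0=\mathbb R^n$ and for $k\ge1$, $X_k=\{y^0+\sum_{i=1}^dy^iw_k^i:\ y^i\in(L^2_{\mathcal F_{k-1}})^n\}$ with inner product $\langle y^0+\sum y^iw_k^i,z^0+\sum z^iw_k^i\rangle_{X_k}=\mathbb E\sum_{i=0}^dy^i\cdot z^i$ (equivalently $\|x\|_{X_k}^2=\mathbb E|x|^2$); products carry the sum of the norms, $(L^2_{\mathcal F_k})^m$ the norm $(\mathbb E|u|^2)^{1/2}$. Data: $b:\{0,\dots,N-1\}\times\mathbb R^n\times\mathbb R^m\to\mathbb R^n$, $\sigma:\{0,\dots,N-1\}\times\mathbb R^n\times\mathbb R^m\to\mathbb R^{n\times d}$ (columns $\sigma^j$), $\ell:\{0,\dots,N-1\}\times\mathbb R^n\times\mathbb R^m\to\mathbb R$, $\Phi:\mathbb R^n\to\mathbb R$, Borel measurable, $C^1$ in $(x,u)$ (resp. $x$), with constants $c_1,c_2>0$ such that for all $k,x,u$ and $\psi\in\{b,\sigma^j\}$: $|\psi(k,x,u)|\le c_1(1+|x|+|u|)$, $|\psi_x|+|\psi_u|\le c_1$; $|\ell(k,x,u)|\le c_2(1+|x|+|u|)^2$,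 $|\ell_x|+|\ell_u|\le c_2(1+|x|+|u|)$, $|\Phi(x)|\le c_2(1+|x|)^2$, $|\Phi_x(x)|\le c_2(1+|x|)$. With $\hat x_0\in\mathbb R^n$: $g_0(x,u)=\hat x_0-x_0$, $g_{k+1}(x,u)=b(k,x_k,u_k)+\sigma(k,x_k,u_k)w_{k+1}-x_{k+1}$ ($k=0,\dots,N-1$), and $f(x,u)=\mathbb E(\sum_{k=0}^{N-1}\ell(k,x_k,u_k)+\Phi(x_N))$. $\psi_{(x,u)}(k,x,u)(z,v)=\psi_xz+\psi_uv$. *)

theory Defs
  imports "HOL-Probability.Probability"
begin

definition filt :: "'a measure \<Rightarrow> (nat \<Rightarrow> 'a \<Rightarrow> real^'d) \<Rightarrow> nat \<Rightarrow> 'a measure" where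
  "filt M w k = sigma (space M) (\<Union>i\<in>{0..k}. {w i -` A \<inter> space M | A. A \<in> sets borel})"

definition L2 :: "'a measure \<Rightarrow> 'a measure \<Rightarrow> ('a \<Rightarrow> 'b::euclidean_space) set" where
  "L2 M F = {u. u \<in> borel_measurable F \<and> integrable M (\<lambda>\<omega>. (norm (u \<omega>))\<^sup>2)}"

definition L2norm :: "'a measure \<Rightarrow> ('a \<Rightarrow> 'b::euclidean_space) \<Rightarrow> real" where
  "L2norm M u = sqrt (\<integral>\<omega>. (norm (u \<omega>))\<^sup>2 \<partial>M)"

text \<open>The spaces X_k: X_0 = R^n (constant random vectors), and for k >= 1
  X_k = { y^0 + sum_i y^i w_k^i : y^i in (L2_{F_{k-1}})^n }.\<close>
definition Xsp :: "'a measure \<Rightarrow> (nat \<Rightarrow> 'a \<Rightarrow> real^'d) \<Rightarrow> nat \<Rightarrow> ('a \<Rightarrow> real^'n) set" where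
  "Xsp M w k = (if k = 0 then {x. \<exists>c. \<forall>\<omega>\<in>space M. x \<omega> = c}
     else {x. \<exists>y0 y. y0 \<in> L2 M (filt M w (k - 1)) \<and> (\<forall>i. y i \<in> L2 M (filt M w (k - 1))) \<and>
           (\<forall>\<omega>\<in>space M. x \<omega> = y0 \<omega> + (\<Sum>i\<in>UNIV. (w k \<omega> $ i) *\<^sub>R y i \<omega>))})"

definition Dom :: "'a measure \<Rightarrow> (nat \<Rightarrow> 'a \<Rightarrow> real^'d) \<Rightarrow> nat
    \<Rightarrow> ((nat \<Rightarrow> 'a \<Rightarrow> real^'n) \<times> (nat \<Rightarrow> 'a \<Rightarrow> real^'m)) set" where
  "Dom M w N = {(x, u). (\<forall>k\<le>N. x k \<in> Xsp M w k) \<and> (\<forall>k<N. u k \<in> L2 M (filt M w k))}"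

definition normX :: "'a measure \<Rightarrow> nat \<Rightarrow> (nat \<Rightarrow> 'a \<Rightarrow> real^'n) \<Rightarrow> real" where
  "normX M N x = (\<Sum>k\<le>N. L2norm M (x k))"

definition normXU :: "'a measure \<Rightarrow> nat \<Rightarrow> (nat \<Rightarrow> 'a \<Rightarrow> real^'n) \<times> (nat \<Rightarrow> 'a \<Rightarrow> real^'m) \<Rightarrow> real" where
  "normXU M N p = (\<Sum>k\<le>N. L2norm M (fst p k)) + (\<Sum>k<N. L2norm M (snd p k))"

definition lincomb :: "real \<Rightarrow> (nat \<Rightarrow> 'a \<Rightarrow> 'b::real_vector) \<Rightarrow> real \<Rightarrow> (nat \<Rightarrow> 'a \<Rightarrow> 'b) \<Rightarrow> nat \<Rightarrow> 'a \<Rightarrow> 'b" where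
  "lincomb a x c y = (\<lambda>k \<omega>. a *\<^sub>R x k \<omega> + c *\<^sub>R y k \<omega>)"

definition plincomb :: "real \<Rightarrow> (nat \<Rightarrow> 'a \<Rightarrow> 'b::real_vector) \<times> (nat \<Rightarrow> 'a \<Rightarrow> 'c::real_vector)
    \<Rightarrow> real \<Rightarrow> (nat \<Rightarrow> 'a \<Rightarrow> 'b) \<times> (nat \<Rightarrow> 'a \<Rightarrow> 'c) \<Rightarrow> (nat \<Rightarrow> 'a \<Rightarrow> 'b) \<times> (nat \<Rightarrow> 'a \<Rightarrow> 'c)" where
  "plincomb a p c q = (lincomb a (fst p) c (fst q), lincomb a (snd p) c (snd q))"

definition gmap :: "(nat \<Rightarrow> 'a \<Rightarrow> real^'d) \<Rightarrow> real^'n \<Rightarrow> (nat \<Rightarrow> real^'n \<Rightarrow> real^'m \<Rightarrow> real^'n)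
    \<Rightarrow> (nat \<Rightarrow> 'd \<Rightarrow> real^'n \<Rightarrow> real^'m \<Rightarrow> real^'n)
    \<Rightarrow> (nat \<Rightarrow> 'a \<Rightarrow> real^'n) \<times> (nat \<Rightarrow> 'a \<Rightarrow> real^'m) \<Rightarrow> nat \<Rightarrow> 'a \<Rightarrow> real^'n" where
  "gmap w x0h b sig p k = (case k of
      0 \<Rightarrow> (\<lambda>\<omega>. x0h - fst p 0 \<omega>)
    | Suc j \<Rightarrow> (\<lambda>\<omega>. b j (fst p j \<omega>) (snd p j \<omega>)
          + (\<Sum>i\<in>UNIV. (w (Suc j) \<omega> $ i) *\<^sub>R sig j i (fst p j \<omega>) (snd p j \<omega>))
          - fst p (Suc j) \<omega>))"

definition fmap :: "'a measure \<Rightarrow> nat \<Rightarrow> (nat \<Rightarrow> real^'n \<Rightarrow> real^'m \<Rightarrow> real) \<Rightarrow> (real^'n \<Rightarrow> real)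
    \<Rightarrow> (nat \<Rightarrow> 'a \<Rightarrow> real^'n) \<times> (nat \<Rightarrow> 'a \<Rightarrow> real^'m) \<Rightarrow> real" where
  "fmap M N ell Phi p = (\<integral>\<omega>. (\<Sum>k<N. ell k (fst p k \<omega>) (snd p k \<omega>)) + Phi (fst p N \<omega>) \<partial>M)"

definition dgmap :: "(nat \<Rightarrow> 'a \<Rightarrow> real^'d)
    \<Rightarrow> (nat \<Rightarrow> real^'n \<Rightarrow> real^'m \<Rightarrow> ((real^'n) \<times> (real^'m)) \<Rightarrow>\<^sub>L (real^'n))
    \<Rightarrow> (nat \<Rightarrow> 'd \<Rightarrow> real^'n \<Rightarrow> real^'m \<Rightarrow> ((real^'n) \<times> (real^'m)) \<Rightarrow>\<^sub>L (real^'n))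
    \<Rightarrow> (nat \<Rightarrow> 'a \<Rightarrow> real^'n) \<times> (nat \<Rightarrow> 'a \<Rightarrow> real^'m)
    \<Rightarrow> (nat \<Rightarrow> 'a \<Rightarrow> real^'n) \<times> (nat \<Rightarrow> 'a \<Rightarrow> real^'m) \<Rightarrow> nat \<Rightarrow> 'a \<Rightarrow> real^'n" where
  "dgmap w Db Dsig p q k = (case k of
      0 \<Rightarrow> (\<lambda>\<omega>. - fst q 0 \<omega>)
    | Suc j \<Rightarrow> (\<lambda>\<omega>. blinfun_apply (Db j (fst p j \<omega>) (snd p j \<omega>)) (fst q j \<omega>, snd q j \<omega>)
          + (\<Sum>i\<in>UNIV. (w (Suc j) \<omega> $ i) *\<^sub>R
                blinfun_apply (Dsig j i (fst p j \<omega>) (snd p j \<omega>)) (fst q j \<omega>, snd q j \<omega>))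
          - fst q (Suc j) \<omega>))"

definition dfmap :: "'a measure \<Rightarrow> nat \<Rightarrow> (nat \<Rightarrow> real^'n \<Rightarrow> real^'m \<Rightarrow> ((real^'n) \<times> (real^'m)) \<Rightarrow>\<^sub>L real)
    \<Rightarrow> (real^'n \<Rightarrow> (real^'n) \<Rightarrow>\<^sub>L real)
    \<Rightarrow> (nat \<Rightarrow> 'a \<Rightarrow> real^'n) \<times> (nat \<Rightarrow> 'a \<Rightarrow> real^'m)
    \<Rightarrow> (nat \<Rightarrow> 'a \<Rightarrow> real^'n) \<times> (nat \<Rightarrow> 'a \<Rightarrow> real^'m) \<Rightarrow> real" where
  "dfmap M N Dell DPhi p q = (\<integral>\<omega>. (\<Sum>k<N. blinfun_apply (Dell k (fst p k \<omega>) (snd p k \<omega>)) (fst q k \<omega>, snd q k \<omega>))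
       + blinfun_apply (DPhi (fst p N \<omega>)) (fst q N \<omega>) \<partial>M)"

definition lipschitz_G :: "'a measure \<Rightarrow> (nat \<Rightarrow> 'a \<Rightarrow> real^'d) \<Rightarrow> nat
    \<Rightarrow> ((nat \<Rightarrow> 'a \<Rightarrow> real^'n) \<times> (nat \<Rightarrow> 'a \<Rightarrow> real^'m) \<Rightarrow> nat \<Rightarrow> 'a \<Rightarrow> real^'n) \<Rightarrow> bool" where
  "lipschitz_G M w N G \<longleftrightarrow> (\<exists>L. \<forall>p\<in>Dom M w N. \<forall>q\<in>Dom M w N.
     normX M N (lincomb 1 (G p) (-1) (G q)) \<le> L * normXU M N (plincomb 1 p (-1) q))"

definition loc_lipschitz_F :: "'a measure \<Rightarrow> (nat \<Rightarrow> 'a \<Rightarrow> real^'d) \<Rightarrow> nat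
    \<Rightarrow> ((nat \<Rightarrow> 'a \<Rightarrow> real^'n) \<times> (nat \<Rightarrow> 'a \<Rightarrow> real^'m) \<Rightarrow> real) \<Rightarrow> bool" where
  "loc_lipschitz_F M w N F \<longleftrightarrow> (\<forall>p\<in>Dom M w N. \<exists>r>0. \<exists>L. \<forall>q1\<in>Dom M w N. \<forall>q2\<in>Dom M w N.
     normXU M N (plincomb 1 q1 (-1) p) < r \<and> normXU M N (plincomb 1 q2 (-1) p) < r \<longrightarrow>
     \<bar>F q1 - F q2\<bar> \<le> L * normXU M N (plincomb 1 q1 (-1) q2))"

text \<open>Gateaux derivative at p: a bounded linear operator DG (into prod X_k, equalities
  understood in the L2 sense) such that (G(p+tq)-G(p))/t -> DG q as t -> 0, for every direction q.\<close>
definition gateaux_deriv_G :: "'a measure \<Rightarrow> (nat \<Rightarrow> 'a \<Rightarrow> real^'d) \<Rightarrow> nat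
    \<Rightarrow> ((nat \<Rightarrow> 'a \<Rightarrow> real^'n) \<times> (nat \<Rightarrow> 'a \<Rightarrow> real^'m) \<Rightarrow> nat \<Rightarrow> 'a \<Rightarrow> real^'n)
    \<Rightarrow> ((nat \<Rightarrow> 'a \<Rightarrow> real^'n) \<times> (nat \<Rightarrow> 'a \<Rightarrow> real^'m) \<Rightarrow> nat \<Rightarrow> 'a \<Rightarrow> real^'n)
    \<Rightarrow> (nat \<Rightarrow> 'a \<Rightarrow> real^'n) \<times> (nat \<Rightarrow> 'a \<Rightarrow> real^'m) \<Rightarrow> bool" where
  "gateaux_deriv_G M w N G DG p \<longleftrightarrow>
     (\<forall>q\<in>Dom M w N. \<forall>k\<le>N. DG q k \<in> Xsp M w k) \<and>
     (\<forall>q1\<in>Dom M w N. \<forall>q2\<in>Dom M w N. \<forall>a c.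
        normX M N (lincomb 1 (DG (plincomb a q1 c q2)) (-1) (lincomb a (DG q1) c (DG q2))) = 0) \<and>
     (\<exists>C. \<forall>q\<in>Dom M w N. normX M N (DG q) \<le> C * normXU M N q) \<and>
     (\<forall>q\<in>Dom M w N. ((\<lambda>t. normX M N (lincomb (1 / t) (lincomb 1 (G (plincomb 1 p t q)) (-1) (G p)) (-1) (DG q)))
         \<longlongrightarrow> 0) (at 0))"

definition gateaux_deriv_F :: "'a measure \<Rightarrow> (nat \<Rightarrow> 'a \<Rightarrow> real^'d) \<Rightarrow> nat
    \<Rightarrow> ((nat \<Rightarrow> 'a \<Rightarrow> real^'n) \<times> (nat \<Rightarrow> 'a \<Rightarrow> real^'m) \<Rightarrow> real)
    \<Rightarrow> ((nat \<Rightarrow> 'a \<Rightarrow> real^'n) \<times> (nat \<Rightarrow> 'a \<Rightarrow> real^'m) \<Rightarrow> real)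
    \<Rightarrow> (nat \<Rightarrow> 'a \<Rightarrow> real^'n) \<times> (nat \<Rightarrow> 'a \<Rightarrow> real^'m) \<Rightarrow> bool" where
  "gateaux_deriv_F M w N F DF p \<longleftrightarrow>
     (\<forall>q1\<in>Dom M w N. \<forall>q2\<in>Dom M w N. \<forall>a c. DF (plincomb a q1 c q2) = a * DF q1 + c * DF q2) \<and>
     (\<exists>C. \<forall>q\<in>Dom M w N. \<bar>DF q\<bar> \<le> C * normXU M N q) \<and>
     (\<forall>q\<in>Dom M w N. ((\<lambda>t. (F (plincomb 1 p t q) - F p) / t) \<longlongrightarrow> DF q) (at 0))"

end

theory Submission
  imports Defs
begin

(*
  Every map involved is built from superposition operators \<omega> \<mapsto> F (a \<omega>) of C\<^sup>1 maps F.
  When DF is bounded, such an operator is globally Lipschitz on L\<^sup>2 and, by dominated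
  convergence, its difference quotients converge in L\<^sup>2 to \<omega> \<mapsto> DF (a \<omega>) (h \<omega>).  When DF
  grows linearly (and F quadratically), Cauchy-Schwarz against 1 + |a| turns the same pointwise
  estimates into local Lipschitz continuity and directional differentiability of the
  expectation of F (a \<omega>).
  The noise enters g only through terms w\<^sup>i\<^sub>k\<^sub>+\<^sub>1 y\<^sup>i with F\<^sub>k-measurable y\<^sup>i.  As w\<^sub>k\<^sub>+\<^sub>1 is
  independent of F\<^sub>k and has coordinates of unit second moment, such a term has the same L\<^sup>2
  norm as y\<^sup>i.  Hence the component of g (or of Dg) at time k+1 is controlled by the components
  of the argument at times k and k+1, and summing over k gives the global Lipschitz bound for g
  and the boundedness of Dg.
*)

section \<open>Square-integrable random variables\<close>

lemma L2norm_nonneg: "L2norm M f \<ge> 0"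
  by (simp add: L2norm_def)

lemma L2norm_cong:
  assumes "\<And>\<omega>. \<omega> \<in> space M \<Longrightarrow> f \<omega> = g \<omega>"
  shows "L2norm M f = L2norm M g"
  using assms unfolding L2norm_def by (auto intro!: arg_cong[where f=sqrt] Bochner_Integration.integral_cong)

lemma L2_cong:
  assumes "f \<in> L2 M F" "space F = space M" "\<And>\<omega>. \<omega> \<in> space M \<Longrightarrow> f \<omega> = g \<omega>"
  shows "g \<in> L2 M F"
proof -
  have "g \<in> borel_measurable F" using assms measurable_cong[of F f g borel] by (auto simp: L2_def)
  moreover have "integrable M (\<lambda>\<omega>. (norm (g \<omega>))\<^sup>2) = integrable M (\<lambda>\<omega>. (norm (f \<omega>))\<^sup>2)"
    by (rule Bochner_Integration.integrable_cong) (auto simp: assms(3))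
  ultimately show ?thesis using assms(1) by (simp add: L2_def)
qed

lemma L2I: "f \<in> borel_measurable F \<Longrightarrow> f \<in> L2 M M \<Longrightarrow> f \<in> L2 M F"
  by (simp add: L2_def)

lemma L2_norm: "f \<in> L2 M M \<Longrightarrow> (\<lambda>\<omega>. norm (f \<omega>)) \<in> L2 M M"
  by (auto simp: L2_def intro: borel_measurable_norm)

lemma L2norm_norm [simp]: "L2norm M (\<lambda>\<omega>. norm (f \<omega>)) = L2norm M f"
  by (simp add: L2norm_def)

lemma L2norm_uminus [simp]: "L2norm M (\<lambda>\<omega>. - f \<omega>) = L2norm M f"
  by (simp add: L2norm_def)

lemma L2_bound:
  fixes f :: "'a \<Rightarrow> 'b::euclidean_space" and g :: "'a \<Rightarrow> 'c::euclidean_space"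
  assumes f: "f \<in> borel_measurable M" and g: "g \<in> L2 M M"
    and le: "\<And>\<omega>. \<omega> \<in> space M \<Longrightarrow> norm (f \<omega>) \<le> norm (g \<omega>)"
  shows "f \<in> L2 M M" and "L2norm M f \<le> L2norm M g"
proof -
  have [measurable]: "g \<in> borel_measurable M" and gi: "integrable M (\<lambda>\<omega>. (norm (g \<omega>))\<^sup>2)"
    using g by (auto simp: L2_def)
  note [measurable] = f
  have le2: "\<omega> \<in> space M \<Longrightarrow> (norm (f \<omega>))\<^sup>2 \<le> (norm (g \<omega>))\<^sup>2" for \<omega>
    by (rule power_mono[OF le]) auto
  have fi: "integrable M (\<lambda>\<omega>. (norm (f \<omega>))\<^sup>2)"
    by (rule Bochner_Integration.integrable_bound[OF gi]) (use le2 in \<open>auto intro!: AE_I2\<close>)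
  then show "f \<in> L2 M M" by (simp add: L2_def)
  have "(\<integral>\<omega>. (norm (f \<omega>))\<^sup>2 \<partial>M) \<le> (\<integral>\<omega>. (norm (g \<omega>))\<^sup>2 \<partial>M)"
    by (intro integral_mono fi gi le2)
  then show "L2norm M f \<le> L2norm M g" by (simp add: L2norm_def)
qed

lemma L2_scaleR:
  fixes f :: "'a \<Rightarrow> 'b::euclidean_space"
  assumes f: "f \<in> L2 M M"
  shows "(\<lambda>\<omega>. c *\<^sub>R f \<omega>) \<in> L2 M M" and "L2norm M (\<lambda>\<omega>. c *\<^sub>R f \<omega>) = \<bar>c\<bar> * L2norm M f"
  using f by (auto simp: L2_def L2norm_def power_mult_distrib real_sqrt_mult)

lemma L2_bound_mult:
  fixes f :: "'a \<Rightarrow> 'b::euclidean_space" and g :: "'a \<Rightarrow> 'c::euclidean_space"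
  assumes f: "f \<in> borel_measurable M" and g: "g \<in> L2 M M" and c: "c \<ge> 0"
    and le: "\<And>\<omega>. \<omega> \<in> space M \<Longrightarrow> norm (f \<omega>) \<le> c * norm (g \<omega>)"
  shows "f \<in> L2 M M" and "L2norm M f \<le> c * L2norm M g"
  using L2_bound[OF f L2_scaleR(1)[OF g, of c]] le L2_scaleR(2)[OF g, of c] c by auto

lemma Cauchy_Schwarz_L2:
  fixes f g :: "'a \<Rightarrow> real"
  assumes f: "f \<in> L2 M M" and g: "g \<in> L2 M M"
  shows "integrable M (\<lambda>\<omega>. f \<omega> * g \<omega>)"
    and "(\<integral>\<omega>. \<bar>f \<omega> * g \<omega>\<bar> \<partial>M) \<le> L2norm M f * L2norm M g"
proof -
  have fm[measurable]: "f \<in> borel_measurable M" and gm[measurable]: "g \<in> borel_measurable M"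
    and fi: "integrable M (\<lambda>\<omega>. (f \<omega>)\<^sup>2)" and gi: "integrable M (\<lambda>\<omega>. (g \<omega>)\<^sup>2)"
    using f g by (auto simp: L2_def)
  show int: "integrable M (\<lambda>\<omega>. f \<omega> * g \<omega>)"
  proof (rule Bochner_Integration.integrable_bound[where f="\<lambda>\<omega>. (f \<omega>)\<^sup>2 + (g \<omega>)\<^sup>2"])
    show "integrable M (\<lambda>\<omega>. (f \<omega>)\<^sup>2 + (g \<omega>)\<^sup>2)" using fi gi by auto
    show "AE x in M. norm (f x * g x) \<le> norm ((f x)\<^sup>2 + (g x)\<^sup>2)"
    proof (intro AE_I2)
      fix x
      have "2 * \<bar>f x * g x\<bar> \<le> (f x)\<^sup>2 + (g x)\<^sup>2"
        using sum_squares_bound[of "\<bar>f x\<bar>" "\<bar>g x\<bar>"] by (simp add: abs_mult mult.assoc)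
      then show "norm (f x * g x) \<le> norm ((f x)\<^sup>2 + (g x)\<^sup>2)" by simp
    qed
  qed simp
  have sq: "(\<integral>\<^sup>+x. (ennreal \<bar>h x\<bar>) ^ 2 \<partial>M) = ennreal (\<integral>x. (h x)\<^sup>2 \<partial>M)"
    if "integrable M (\<lambda>x. (h x)\<^sup>2)" for h :: "'a \<Rightarrow> real"
  proof -
    have "(\<integral>\<^sup>+x. (ennreal \<bar>h x\<bar>) ^ 2 \<partial>M) = (\<integral>\<^sup>+x. ennreal ((h x)\<^sup>2) \<partial>M)"
      by (simp add: ennreal_power)
    also have "\<dots> = ennreal (\<integral>x. (h x)\<^sup>2 \<partial>M)"
      by (rule nn_integral_eq_integral[OF that]) auto
    finally show ?thesis .
  qed
  have "(\<integral>\<^sup>+x. ennreal \<bar>f x\<bar> * ennreal \<bar>g x\<bar> \<partial>M)\<^sup>2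
      \<le> (\<integral>\<^sup>+x. (ennreal \<bar>f x\<bar>) ^ 2 \<partial>M) * (\<integral>\<^sup>+x. (ennreal \<bar>g x\<bar>) ^ 2 \<partial>M)"
    by (rule Cauchy_Schwarz_nn_integral) auto
  moreover have "(\<integral>\<^sup>+x. ennreal \<bar>f x\<bar> * ennreal \<bar>g x\<bar> \<partial>M) = ennreal (\<integral>x. \<bar>f x * g x\<bar> \<partial>M)"
  proof -
    have ai: "integrable M (\<lambda>x. \<bar>f x\<bar> * \<bar>g x\<bar>)" using integrable_abs[OF int] by (simp add: abs_mult)
    show ?thesis by (subst ennreal_mult'[symmetric]) (auto simp: abs_mult intro!: nn_integral_eq_integral ai)
  qed
  moreover note sq[OF fi] sq[OF gi]
  ultimately have "ennreal ((\<integral>x. \<bar>f x * g x\<bar> \<partial>M)\<^sup>2) \<le> ennreal ((\<integral>x. (f x)\<^sup>2 \<partial>M) * (\<integral>x. (g x)\<^sup>2 \<partial>M))"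
    by (simp add: ennreal_power ennreal_mult' integral_nonneg)
  then have "(\<integral>x. \<bar>f x * g x\<bar> \<partial>M)\<^sup>2 \<le> (\<integral>x. (f x)\<^sup>2 \<partial>M) * (\<integral>x. (g x)\<^sup>2 \<partial>M)"
    by (subst (asm) ennreal_le_iff) (auto simp: integral_nonneg)
  then have "sqrt ((\<integral>x. \<bar>f x * g x\<bar> \<partial>M)\<^sup>2) \<le> sqrt ((\<integral>x. (f x)\<^sup>2 \<partial>M) * (\<integral>x. (g x)\<^sup>2 \<partial>M))"
    by (rule real_sqrt_le_mono)
  then show "(\<integral>\<omega>. \<bar>f \<omega> * g \<omega>\<bar> \<partial>M) \<le> L2norm M f * L2norm M g"
    by (simp add: L2norm_def real_sqrt_mult integral_nonneg)
qed

lemma L2_add: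
  fixes f g :: "'a \<Rightarrow> 'b::euclidean_space"
  assumes f: "f \<in> L2 M M" and g: "g \<in> L2 M M"
  shows "(\<lambda>\<omega>. f \<omega> + g \<omega>) \<in> L2 M M"
    and "L2norm M (\<lambda>\<omega>. f \<omega> + g \<omega>) \<le> L2norm M f + L2norm M g"
proof -
  have [measurable]: "f \<in> borel_measurable M" "g \<in> borel_measurable M"
    and fi: "integrable M (\<lambda>\<omega>. (norm (f \<omega>))\<^sup>2)" and gi: "integrable M (\<lambda>\<omega>. (norm (g \<omega>))\<^sup>2)"
    using f g by (auto simp: L2_def)
  note cs = Cauchy_Schwarz_L2[OF L2_norm[OF f] L2_norm[OF g]]
  define B where "B = (\<lambda>x. (norm (f x))\<^sup>2 + 2 * (norm (f x) * norm (g x)) + (norm (g x))\<^sup>2)"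
  have B: "integrable M B" unfolding B_def using fi gi cs(1) by auto
  have le: "(norm (f x + g x))\<^sup>2 \<le> B x" for x
  proof -
    have "(norm (f x + g x))\<^sup>2 \<le> (norm (f x) + norm (g x))\<^sup>2"
      by (intro power_mono norm_triangle_ineq) auto
    then show ?thesis by (simp add: B_def power2_sum)
  qed
  have int: "integrable M (\<lambda>\<omega>. (norm (f \<omega> + g \<omega>))\<^sup>2)"
    by (rule Bochner_Integration.integrable_bound[OF B]) (use le in \<open>auto intro!: AE_I2 simp: B_def\<close>)
  then show "(\<lambda>\<omega>. f \<omega> + g \<omega>) \<in> L2 M M" by (simp add: L2_def)
  have "(L2norm M (\<lambda>\<omega>. f \<omega> + g \<omega>))\<^sup>2 = (\<integral>x. (norm (f x + g x))\<^sup>2 \<partial>M)"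
    by (simp add: L2norm_def integral_nonneg)
  also have "\<dots> \<le> (\<integral>x. B x \<partial>M)" by (intro integral_mono int B le)
  also have "\<dots> = (L2norm M f)\<^sup>2 + 2 * (\<integral>x. norm (f x) * norm (g x) \<partial>M) + (L2norm M g)\<^sup>2"
    using fi gi cs(1) by (simp add: B_def L2norm_def integral_nonneg)
  also have "\<dots> \<le> (L2norm M f + L2norm M g)\<^sup>2"
    using cs(2) by (simp add: power2_sum)
  finally show "L2norm M (\<lambda>\<omega>. f \<omega> + g \<omega>) \<le> L2norm M f + L2norm M g"
    by (rule power2_le_imp_le) (simp add: L2norm_nonneg add_nonneg_nonneg)
qed

lemma L2_diff:
  fixes f g :: "'a \<Rightarrow> 'b::euclidean_space"
  assumes f: "f \<in> L2 M M" and g: "g \<in> L2 M M"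
  shows "(\<lambda>\<omega>. f \<omega> - g \<omega>) \<in> L2 M M"
    and "L2norm M (\<lambda>\<omega>. f \<omega> - g \<omega>) \<le> L2norm M f + L2norm M g"
  using L2_add[OF f L2_scaleR(1)[OF g, of "-1"]] L2_scaleR(2)[OF g, of "-1"] by auto

lemma L2_sum:
  fixes f :: "'i \<Rightarrow> 'a \<Rightarrow> 'b::euclidean_space"
  assumes "finite I" "\<And>i. i \<in> I \<Longrightarrow> f i \<in> L2 M M"
  shows "(\<lambda>\<omega>. \<Sum>i\<in>I. f i \<omega>) \<in> L2 M M \<and> L2norm M (\<lambda>\<omega>. \<Sum>i\<in>I. f i \<omega>) \<le> (\<Sum>i\<in>I. L2norm M (f i))"
  using assms
proof (induction I rule: finite_induct)
  case empty
  then show ?case by (simp add: L2_def L2norm_def)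
next
  case (insert i I)
  then show ?case using L2_add[of "f i" M "\<lambda>\<omega>. \<Sum>i\<in>I. f i \<omega>"] by auto
qed

lemma L2_Pair:
  fixes x :: "'a \<Rightarrow> 'x::euclidean_space" and u :: "'a \<Rightarrow> 'y::euclidean_space"
  assumes x: "x \<in> L2 M M" and u: "u \<in> L2 M M"
  shows "(\<lambda>\<omega>. (x \<omega>, u \<omega>)) \<in> L2 M M" and "L2norm M (\<lambda>\<omega>. (x \<omega>, u \<omega>)) \<le> L2norm M x + L2norm M u"
proof -
  have "(\<lambda>\<omega>. (x \<omega>, u \<omega>)) \<in> borel_measurable M" using x u by (auto simp: L2_def)
  note r = L2_bound[OF this L2_add(1)[OF L2_norm[OF x] L2_norm[OF u]]]
  show "(\<lambda>\<omega>. (x \<omega>, u \<omega>)) \<in> L2 M M"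
    using r(1) norm_Pair_le by auto
  show "L2norm M (\<lambda>\<omega>. (x \<omega>, u \<omega>)) \<le> L2norm M x + L2norm M u"
    using r(2) norm_Pair_le L2_add(2)[OF L2_norm[OF x] L2_norm[OF u]] by fastforce
qed

lemma L2_product_bound:
  fixes g h :: "'a \<Rightarrow> real"
  assumes g: "g \<in> L2 M M" and h: "h \<in> L2 M M" and f: "f \<in> borel_measurable M"
    and le: "\<And>\<omega>. \<omega> \<in> space M \<Longrightarrow> \<bar>f \<omega>\<bar> \<le> K * (g \<omega> * h \<omega>)"
  shows "integrable M f" and "(\<integral>\<omega>. \<bar>f \<omega>\<bar> \<partial>M) \<le> \<bar>K\<bar> * (L2norm M g * L2norm M h)"
proof -
  note cs = Cauchy_Schwarz_L2[OF g h]
  have i2: "integrable M (\<lambda>\<omega>. \<bar>K\<bar> * \<bar>g \<omega> * h \<omega>\<bar>)" using cs(1) by auto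
  have le': "\<bar>f \<omega>\<bar> \<le> \<bar>K\<bar> * \<bar>g \<omega> * h \<omega>\<bar>" if "\<omega> \<in> space M" for \<omega>
    using le[OF that] abs_ge_self[of "K * (g \<omega> * h \<omega>)"] by (simp add: abs_mult)
  show fi: "integrable M f"
    by (rule Bochner_Integration.integrable_bound[OF i2 f]) (auto intro!: AE_I2 simp: le')
  have "(\<integral>\<omega>. \<bar>f \<omega>\<bar> \<partial>M) \<le> (\<integral>\<omega>. \<bar>K\<bar> * \<bar>g \<omega> * h \<omega>\<bar> \<partial>M)"
    by (rule integral_mono[OF integrable_abs[OF fi] i2 le'])
  also have "\<dots> \<le> \<bar>K\<bar> * (L2norm M g * L2norm M h)"
    using cs(2) by (simp add: mult_left_mono)
  finally show "(\<integral>\<omega>. \<bar>f \<omega>\<bar> \<partial>M) \<le> \<bar>K\<bar> * (L2norm M g * L2norm M h)" .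
qed

lemma (in finite_measure) L2_const: "(\<lambda>\<omega>. c) \<in> L2 M M"
  by (simp add: L2_def)

lemma (in prob_space) L2norm_const: "L2norm M (\<lambda>\<omega>. c) = norm c"
  by (simp add: L2norm_def prob_space)

lemma (in prob_space) L2_one_plus_norm:
  assumes "a \<in> L2 M M"
  shows "(\<lambda>\<omega>. 1 + norm (a \<omega>)) \<in> L2 M M" and "L2norm M (\<lambda>\<omega>. 1 + norm (a \<omega>)) \<le> 1 + L2norm M a"
  using L2_add[OF L2_const[of "1::real"] L2_norm[OF assms]] by (auto simp: L2norm_const)

lemma norm_blinfun_le_of_partials:
  fixes D :: "('x::real_normed_vector \<times> 'y::real_normed_vector) \<Rightarrow>\<^sub>L 'z::real_normed_vector"
  assumes "onorm (\<lambda>z. D (z, 0)) + onorm (\<lambda>v. D (0, v)) \<le> c"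
  shows "norm D \<le> c"
proof -
  have bl: "bounded_linear (\<lambda>z. D (z, 0))" "bounded_linear (\<lambda>v. D (0, v))"
    by (auto intro!: bounded_linear_compose[OF blinfun.bounded_linear_right] bounded_linear_Pair)
  have le: "norm (D (z, v)) \<le> c * norm (z, v)" for z v
  proof -
    have "D (z, v) = D (z, 0) + D (0, v)"
      by (metis add.right_neutral add_Pair add_0 blinfun.add_right)
    then have "norm (D (z, v)) \<le> norm (D (z, 0)) + norm (D (0, v))"
      using norm_triangle_ineq[of "D (z, 0)" "D (0, v)"] by simp
    also have "\<dots> \<le> onorm (\<lambda>z. D (z, 0)) * norm z + onorm (\<lambda>v. D (0, v)) * norm v"
      using onorm[OF bl(1), of z] onorm[OF bl(2), of v] by (rule add_mono)
    also have "\<dots> \<le> (onorm (\<lambda>z. D (z, 0)) + onorm (\<lambda>v. D (0, v))) * norm (z, v)"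
      using onorm_pos_le[OF bl(1)] onorm_pos_le[OF bl(2)] norm_fst_le[of z v] norm_snd_le[of v z]
      by (simp add: distrib_right add_mono mult_left_mono)
    also have "\<dots> \<le> c * norm (z, v)"
      using assms by (simp add: mult_right_mono)
    finally show ?thesis .
  qed
  have "0 \<le> c" using assms onorm_pos_le[OF bl(1)] onorm_pos_le[OF bl(2)] by linarith
  then show ?thesis using le by (intro norm_blinfun_bound) auto
qed

lemma blinfun_apply_Pair_lincomb:
  "blinfun_apply D (a *\<^sub>R z1 + c *\<^sub>R z2, a *\<^sub>R v1 + c *\<^sub>R v2)
    = a *\<^sub>R blinfun_apply D (z1, v1) + c *\<^sub>R blinfun_apply D (z2, v2)"
proof -
  have "(a *\<^sub>R z1 + c *\<^sub>R z2, a *\<^sub>R v1 + c *\<^sub>R v2) = a *\<^sub>R (z1, v1) + c *\<^sub>R (z2, v2)" by simp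
  then show ?thesis by (simp only: blinfun.add_right blinfun.scaleR_right)
qed

lemma has_derivative_difference_quotient:
  fixes f :: "'v::real_normed_vector \<Rightarrow> 'w::real_normed_vector"
  assumes d: "(f has_derivative f') (at a)"
  shows "((\<lambda>t. (f (a + t *\<^sub>R h) - f a) /\<^sub>R t) \<longlongrightarrow> f' h) (at (0::real))"
proof -
  have lin: "f' (t *\<^sub>R h) = t *\<^sub>R f' h" for t
    using has_derivative_bounded_linear[OF d] by (simp add: linear_simps)
  have "((f \<circ> (\<lambda>t. a + t *\<^sub>R h)) has_derivative (f' \<circ> (\<lambda>t. t *\<^sub>R h))) (at 0)"
    by (rule diff_chain_at) (auto intro!: derivative_eq_intros simp: d)
  then have "((\<lambda>t. ((f (a + t *\<^sub>R h) - f a) - t *\<^sub>R f' h) /\<^sub>R norm t) \<longlongrightarrow> 0) (at 0)"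
    unfolding has_derivative_at_within by (simp add: comp_def lin)
  then have "((\<lambda>t. norm (((f (a + t *\<^sub>R h) - f a) - t *\<^sub>R f' h) /\<^sub>R norm t)) \<longlongrightarrow> 0) (at 0)"
    by (rule tendsto_norm_zero)
  then have "((\<lambda>t. norm ((f (a + t *\<^sub>R h) - f a) /\<^sub>R t - f' h)) \<longlongrightarrow> 0) (at (0::real))"
  proof (rule Lim_transform_eventually)
    show "\<forall>\<^sub>F t in at 0. norm (((f (a + t *\<^sub>R h) - f a) - t *\<^sub>R f' h) /\<^sub>R norm t)
        = norm ((f (a + t *\<^sub>R h) - f a) /\<^sub>R t - f' h)"
      unfolding eventually_at_filter
    proof (intro always_eventually allI impI)
      fix t :: real assume "t \<noteq> 0"
      then have "(f (a + t *\<^sub>R h) - f a) /\<^sub>R t - f' h = (1 / t) *\<^sub>R ((f (a + t *\<^sub>R h) - f a) - t *\<^sub>R f' h)"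
        by (simp add: scaleR_diff_right divide_inverse_commute)
      then show "norm (((f (a + t *\<^sub>R h) - f a) - t *\<^sub>R f' h) /\<^sub>R norm t)
          = norm ((f (a + t *\<^sub>R h) - f a) /\<^sub>R t - f' h)"
        by (simp add: divide_inverse mult.commute)
    qed
  qed
  then show ?thesis
    by (rule LIM_zero_cancel[OF tendsto_norm_zero_cancel])
qed

lemma integral_dominated_convergence_at_0:
  fixes s :: "real \<Rightarrow> 'a \<Rightarrow> real"
  assumes meas: "\<And>t. s t \<in> borel_measurable M" and h: "integrable M h"
    and lim: "\<And>\<omega>. \<omega> \<in> space M \<Longrightarrow> ((\<lambda>t. s t \<omega>) \<longlongrightarrow> 0) (at 0)"
    and bound: "\<And>t \<omega>. t \<noteq> 0 \<Longrightarrow> \<bar>t\<bar> < 1 \<Longrightarrow> \<omega> \<in> space M \<Longrightarrow> \<bar>s t \<omega>\<bar> \<le> h \<omega>"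
  shows "((\<lambda>t. \<integral>\<omega>. s t \<omega> \<partial>M) \<longlongrightarrow> 0) (at 0)"
  unfolding tendsto_at_iff_sequentially comp_def
proof (intro allI impI)
  fix X :: "nat \<Rightarrow> real"
  assume X0: "\<forall>i. X i \<in> UNIV - {0}" and X: "X \<longlonglongrightarrow> 0"
  obtain n0 where n0: "\<And>n. n \<ge> n0 \<Longrightarrow> \<bar>X n\<bar> < 1"
    using LIMSEQ_D[OF X, of 1] by auto
  have "(\<lambda>n. \<integral>\<omega>. s (X (n + n0)) \<omega> \<partial>M) \<longlonglongrightarrow> (\<integral>\<omega>. 0 \<partial>M)"
  proof (rule integral_dominated_convergence[OF _ meas h])
    show "AE \<omega> in M. (\<lambda>n. s (X (n + n0)) \<omega>) \<longlonglongrightarrow> 0"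
    proof (rule AE_I2)
      fix \<omega> assume "\<omega> \<in> space M"
      have "filterlim (\<lambda>n. X (n + n0)) (at 0) sequentially"
        using LIMSEQ_ignore_initial_segment[OF X] X0 by (auto simp: filterlim_at intro!: always_eventually)
      then show "(\<lambda>n. s (X (n + n0)) \<omega>) \<longlonglongrightarrow> 0"
        by (rule filterlim_compose[OF lim[OF \<open>\<omega> \<in> space M\<close>]])
    qed
    show "AE \<omega> in M. norm (s (X (n + n0)) \<omega>) \<le> h \<omega>" for n
      using bound[of "X (n + n0)"] X0 n0[of "n + n0"] by (intro AE_I2) auto
  qed simp
  then have "(\<lambda>n. \<integral>\<omega>. s (X (n + n0)) \<omega> \<partial>M) \<longlonglongrightarrow> 0" by simp
  then show "(\<lambda>n. \<integral>\<omega>. s (X n) \<omega> \<partial>M) \<longlonglongrightarrow> 0"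
    by (rule LIMSEQ_offset)
qed

lemma sum_le_of_stepwise_bound:
  fixes a X U :: "nat \<Rightarrow> real"
  assumes X0: "\<And>k. X k \<ge> 0" and U0: "\<And>k. U k \<ge> 0" and K0: "K \<ge> 0"
    and a0: "a 0 \<le> X 0" and aSuc: "\<And>j. j < N \<Longrightarrow> a (Suc j) \<le> K * (X j + U j) + X (Suc j)"
  shows "(\<Sum>k\<le>N. a k) \<le> (K + 1) * ((\<Sum>k\<le>N. X k) + (\<Sum>k<N. U k))"
proof -
  have "(\<Sum>k\<le>N. a k) = a 0 + (\<Sum>j<N. a (Suc j))" by (simp add: sum.atMost_shift)
  also have "\<dots> \<le> X 0 + (\<Sum>j<N. K * (X j + U j) + X (Suc j))"
    using a0 aSuc by (intro add_mono sum_mono) auto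
  also have "\<dots> = (\<Sum>k\<le>N. X k) + K * (\<Sum>j<N. X j) + K * (\<Sum>j<N. U j)"
    by (simp add: sum.atMost_shift sum.distrib sum_distrib_left algebra_simps)
  finally have "(\<Sum>k\<le>N. a k) \<le> (\<Sum>k\<le>N. X k) + K * (\<Sum>j<N. X j) + K * (\<Sum>j<N. U j)" .
  moreover have "K * (\<Sum>j<N. X j) \<le> K * (\<Sum>k\<le>N. X k)"
    by (rule mult_left_mono[OF sum_mono2 K0]) (auto simp: X0)
  ultimately show ?thesis
    using sum_nonneg[of "{..<N}" U] U0 by (simp add: algebra_simps)
qed

section \<open>Superposition operators of \<open>C\<^sup>1\<close> maps on \<open>L\<^sup>2\<close>\<close>

locale C1_map =
  fixes F :: "'v::euclidean_space \<Rightarrow> 'w::euclidean_space" and DF :: "'v \<Rightarrow> 'v \<Rightarrow>\<^sub>L 'w"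
  assumes has_derivative_F: "(F has_derivative DF p) (at p)"
    and continuous_on_DF: "continuous_on UNIV DF"
begin

lemma continuous_on_F: "continuous_on UNIV F"
  using has_derivative_continuous[OF has_derivative_F] by (intro continuous_at_imp_continuous_on) simp

lemma borel_measurable_F_comp: "a \<in> borel_measurable S \<Longrightarrow> (\<lambda>\<omega>. F (a \<omega>)) \<in> borel_measurable S"
  by (rule borel_measurable_continuous_on[OF continuous_on_F])

lemma borel_measurable_DF_apply:
  assumes "a \<in> borel_measurable S" "h \<in> borel_measurable S"
  shows "(\<lambda>\<omega>. DF (a \<omega>) (h \<omega>)) \<in> borel_measurable S"
proof -
  have "continuous_on UNIV (\<lambda>q. DF (fst q) (snd q))"
    by (intro blinfun.continuous_on continuous_on_compose2[OF continuous_on_DF] continuous_intros) auto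
  from borel_measurable_continuous_Pair[OF assms this] show ?thesis by simp
qed

lemma borel_measurable_difference_quotient:
  assumes "a \<in> borel_measurable S" "h \<in> borel_measurable S"
  shows "(\<lambda>\<omega>. (F (a \<omega> + t *\<^sub>R h \<omega>) - F (a \<omega>)) /\<^sub>R t - DF (a \<omega>) (h \<omega>)) \<in> borel_measurable S"
  using assms by (intro borel_measurable_diff borel_measurable_scaleR borel_measurable_const
      borel_measurable_F_comp borel_measurable_DF_apply borel_measurable_add) auto

lemma norm_diff_le:
  assumes "\<And>p. p \<in> closed_segment a b \<Longrightarrow> norm (DF p) \<le> B"
  shows "norm (F a - F b) \<le> B * norm (a - b)"
  using assms by (intro differentiable_bound[of "closed_segment a b"])
    (auto simp: norm_blinfun.rep_eq intro: has_derivative_at_withinI[OF has_derivative_F])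

lemma difference_quotient_tendsto: "((\<lambda>t. (F (a + t *\<^sub>R h) - F a) /\<^sub>R t) \<longlongrightarrow> DF a h) (at 0)"
  by (rule has_derivative_difference_quotient[OF has_derivative_F])

end

locale C1_bounded_deriv = C1_map +
  fixes c :: real
  assumes norm_DF_le: "norm (DF p) \<le> c"
begin

lemma c_nonneg: "c \<ge> 0"
  using norm_DF_le[of 0] norm_ge_zero[of "DF 0"] by linarith

lemma lipschitz: "norm (F a - F b) \<le> c * norm (a - b)"
  by (rule norm_diff_le) (rule norm_DF_le)

lemma norm_DF_apply_le: "norm (DF a h) \<le> c * norm h"
  using norm_blinfun[of "DF a" h] mult_right_mono[OF norm_DF_le[of a] norm_ge_zero[of h]] by linarith

lemma L2_comp_diff:
  assumes "a \<in> L2 M M" "a' \<in> L2 M M"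
  shows "(\<lambda>\<omega>. F (a \<omega>) - F (a' \<omega>)) \<in> L2 M M"
    and "L2norm M (\<lambda>\<omega>. F (a \<omega>) - F (a' \<omega>)) \<le> c * L2norm M (\<lambda>\<omega>. a \<omega> - a' \<omega>)"
proof -
  have "(\<lambda>\<omega>. F (a \<omega>) - F (a' \<omega>)) \<in> borel_measurable M"
    using assms by (intro borel_measurable_diff borel_measurable_F_comp) (auto simp: L2_def)
  from L2_bound_mult[OF this L2_diff(1)[OF assms] c_nonneg lipschitz]
  show "(\<lambda>\<omega>. F (a \<omega>) - F (a' \<omega>)) \<in> L2 M M"
    and "L2norm M (\<lambda>\<omega>. F (a \<omega>) - F (a' \<omega>)) \<le> c * L2norm M (\<lambda>\<omega>. a \<omega> - a' \<omega>)" .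
qed

lemma L2_comp:
  assumes "finite_measure M" "a \<in> L2 M M"
  shows "(\<lambda>\<omega>. F (a \<omega>)) \<in> L2 M M"
proof -
  have "(\<lambda>\<omega>. (F (a \<omega>) - F 0) + F 0) \<in> L2 M M"
    using L2_comp_diff(1)[OF assms(2), of "\<lambda>_. 0"] finite_measure.L2_const[OF assms(1)]
    by (rule L2_add(1)) (auto simp: L2_def)
  then show ?thesis by simp
qed

lemma L2_DF_apply:
  assumes "a \<in> borel_measurable M" "h \<in> L2 M M"
  shows "(\<lambda>\<omega>. DF (a \<omega>) (h \<omega>)) \<in> L2 M M" and "L2norm M (\<lambda>\<omega>. DF (a \<omega>) (h \<omega>)) \<le> c * L2norm M h"
  using L2_bound_mult[OF borel_measurable_DF_apply[OF assms(1)] _ c_nonneg norm_DF_apply_le] assms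
  by (auto simp: L2_def)

lemma norm_difference_quotient_le: "norm ((F (a + t *\<^sub>R h) - F a) /\<^sub>R t - DF a h) \<le> 2 * c * norm h"
proof -
  have "norm ((F (a + t *\<^sub>R h) - F a) /\<^sub>R t) \<le> c * norm h"
  proof (cases "t = 0")
    case False
    have "norm (F (a + t *\<^sub>R h) - F a) \<le> \<bar>t\<bar> * (c * norm h)"
      using lipschitz[of "a + t *\<^sub>R h" a] by (simp add: mult_ac)
    then have "inverse \<bar>t\<bar> * norm (F (a + t *\<^sub>R h) - F a) \<le> inverse \<bar>t\<bar> * (\<bar>t\<bar> * (c * norm h))"
      by (rule mult_left_mono) simp
    also have "\<dots> = c * norm h"
      using False by simp
    finally show ?thesis by simp
  qed (simp add: c_nonneg)
  then show ?thesis
    using norm_triangle_ineq4[of "(F (a + t *\<^sub>R h) - F a) /\<^sub>R t" "DF a h"] norm_DF_apply_le[of a h]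
    by linarith
qed

lemma L2_difference_quotient:
  assumes a: "a \<in> borel_measurable M" and h: "h \<in> L2 M M"
  defines "Q \<equiv> \<lambda>t \<omega>. (F (a \<omega> + t *\<^sub>R h \<omega>) - F (a \<omega>)) /\<^sub>R t - DF (a \<omega>) (h \<omega>)"
  shows "Q t \<in> L2 M M" and "((\<lambda>t. L2norm M (Q t)) \<longlongrightarrow> 0) (at 0)"
proof -
  have hm: "h \<in> borel_measurable M" using h by (simp add: L2_def)
  have le: "norm (Q t \<omega>) \<le> (2 * c) * norm (h \<omega>)" for t \<omega>
    unfolding Q_def by (rule norm_difference_quotient_le)
  have c2: "2 * c \<ge> 0" using c_nonneg by simp
  have Qm: "Q t \<in> borel_measurable M" for t
    unfolding Q_def by (rule borel_measurable_difference_quotient[OF a hm])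
  show QL: "Q t \<in> L2 M M" for t
    by (rule L2_bound_mult(1)[OF Qm h c2 le])
  have "((\<lambda>t. \<integral>\<omega>. (norm (Q t \<omega>))\<^sup>2 \<partial>M) \<longlongrightarrow> 0) (at 0)"
  proof (rule integral_dominated_convergence_at_0)
    show "(\<lambda>\<omega>. (norm (Q t \<omega>))\<^sup>2) \<in> borel_measurable M" for t
      using Qm[of t] by measurable
    show "integrable M (\<lambda>\<omega>. (2 * c)\<^sup>2 * (norm (h \<omega>))\<^sup>2)"
      using h by (simp add: L2_def)
    fix \<omega>
    have "((\<lambda>t. Q t \<omega>) \<longlongrightarrow> 0) (at 0)"
      unfolding Q_def by (rule LIM_zero[OF difference_quotient_tendsto])
    from tendsto_power[OF tendsto_norm_zero[OF this], of 2]
    show "((\<lambda>t. (norm (Q t \<omega>))\<^sup>2) \<longlongrightarrow> 0) (at 0)" by simp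
    fix t
    show "\<bar>(norm (Q t \<omega>))\<^sup>2\<bar> \<le> (2 * c)\<^sup>2 * (norm (h \<omega>))\<^sup>2"
      using power_mono[OF le[of t \<omega>], of 2] by (simp add: power_mult_distrib)
  qed
  from tendsto_real_sqrt[OF this]
  show "((\<lambda>t. L2norm M (Q t)) \<longlongrightarrow> 0) (at 0)" by (simp add: L2norm_def)
qed

end

lemma C1_bounded_deriv_of_partials:
  fixes F :: "'x::euclidean_space \<Rightarrow> 'y::euclidean_space \<Rightarrow> 'z::euclidean_space"
    and D :: "'x \<Rightarrow> 'y \<Rightarrow> ('x \<times> 'y) \<Rightarrow>\<^sub>L 'z"
  assumes "\<forall>x u. ((\<lambda>p. F (fst p) (snd p)) has_derivative D x u) (at (x, u))"
    and "continuous_on UNIV (\<lambda>p. D (fst p) (snd p))"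
    and "\<forall>x u. onorm (\<lambda>z. D x u (z, 0)) + onorm (\<lambda>v. D x u (0, v)) \<le> c"
  shows "C1_bounded_deriv (\<lambda>p. F (fst p) (snd p)) (\<lambda>p. D (fst p) (snd p)) c"
proof unfold_locales
  fix p :: "'x \<times> 'y"
  show "((\<lambda>p. F (fst p) (snd p)) has_derivative D (fst p) (snd p)) (at p)"
    using assms(1) by (cases p) simp
  show "norm (D (fst p) (snd p)) \<le> c"
    using assms(3) by (intro norm_blinfun_le_of_partials) simp
qed (rule assms(2))

locale C1_quadratic_growth = C1_map F DF for F :: "'v::euclidean_space \<Rightarrow> real" and DF +
  fixes K :: real
  assumes norm_DF_le: "norm (DF p) \<le> K * (1 + norm p)"
    and abs_F_le: "\<bar>F p\<bar> \<le> K * (1 + norm p)\<^sup>2"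
begin

lemma K_nonneg: "K \<ge> 0"
  using order_trans[OF norm_ge_zero norm_DF_le[of 0]] by simp

lemma abs_F_diff_le: "\<bar>F a - F b\<bar> \<le> K * ((1 + norm a + norm b) * norm (a - b))"
proof -
  have "norm (DF p) \<le> K * (1 + norm a + norm b)" if "p \<in> closed_segment a b" for p
  proof -
    have "closed_segment a b \<subseteq> cball 0 (norm a + norm b)"
      by (rule closed_segment_subset) (auto simp: dist_norm)
    then have "1 + norm p \<le> 1 + norm a + norm b"
      using that by auto
    from mult_left_mono[OF this K_nonneg] show ?thesis
      using norm_DF_le[of p] by linarith
  qed
  then have "norm (F a - F b) \<le> K * (1 + norm a + norm b) * norm (a - b)"
    by (rule norm_diff_le)
  then show ?thesis by (simp add: mult.assoc)
qed

lemma abs_DF_apply_le: "\<bar>DF a h\<bar> \<le> K * ((1 + norm a) * norm h)"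
  using norm_blinfun[of "DF a" h] mult_right_mono[OF norm_DF_le[of a] norm_ge_zero[of h]]
  by (simp add: mult.assoc)

lemma abs_difference_quotient_le:
  assumes t0: "t \<noteq> 0" and t1: "\<bar>t\<bar> < 1"
  shows "\<bar>(F (a + t *\<^sub>R h) - F a) / t - DF a h\<bar> \<le> 2 * K * ((1 + 2 * norm a + norm h) * norm h)"
proof -
  have "norm (t *\<^sub>R h) \<le> norm h"
    using t1 mult_left_le_one_le[of "norm h" "\<bar>t\<bar>"] by simp
  then have g: "1 + norm (a + t *\<^sub>R h) + norm a \<le> 1 + 2 * norm a + norm h"
    using norm_triangle_ineq[of a "t *\<^sub>R h"] by simp
  have "\<bar>F (a + t *\<^sub>R h) - F a\<bar> \<le> K * ((1 + norm (a + t *\<^sub>R h) + norm a) * norm (t *\<^sub>R h))"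
    using abs_F_diff_le[of "a + t *\<^sub>R h" a] by simp
  also have "\<dots> \<le> K * ((1 + 2 * norm a + norm h) * norm (t *\<^sub>R h))"
    by (intro mult_left_mono mult_right_mono g K_nonneg norm_ge_zero)
  also have "\<dots> = \<bar>t\<bar> * (K * ((1 + 2 * norm a + norm h) * norm h))"
    by (simp add: mult_ac)
  finally have "\<bar>F (a + t *\<^sub>R h) - F a\<bar> / \<bar>t\<bar> \<le> \<bar>t\<bar> * (K * ((1 + 2 * norm a + norm h) * norm h)) / \<bar>t\<bar>"
    by (rule divide_right_mono) simp
  then have "\<bar>(F (a + t *\<^sub>R h) - F a) / t\<bar> \<le> K * ((1 + 2 * norm a + norm h) * norm h)"
    using t0 by (simp add: abs_divide)
  moreover have "1 + norm a \<le> 1 + 2 * norm a + norm h"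
    using norm_ge_zero[of a] norm_ge_zero[of h] by linarith
  then have "(1 + norm a) * norm h \<le> (1 + 2 * norm a + norm h) * norm h"
    by (rule mult_right_mono) simp
  then have "\<bar>DF a h\<bar> \<le> K * ((1 + 2 * norm a + norm h) * norm h)"
    by (rule order_trans[OF abs_DF_apply_le mult_left_mono[OF _ K_nonneg]])
  ultimately show ?thesis by linarith
qed

context
  fixes M :: "'a measure"
  assumes M: "prob_space M"
begin

interpretation prob_space M by (rule M)

lemma integrable_comp:
  assumes a: "a \<in> L2 M M"
  shows "integrable M (\<lambda>\<omega>. F (a \<omega>))"
proof (rule L2_product_bound(1)[OF L2_one_plus_norm(1)[OF a] L2_one_plus_norm(1)[OF a]])
  show "(\<lambda>\<omega>. F (a \<omega>)) \<in> borel_measurable M"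
    using a by (intro borel_measurable_F_comp) (simp add: L2_def)
  show "\<bar>F (a \<omega>)\<bar> \<le> K * ((1 + norm (a \<omega>)) * (1 + norm (a \<omega>)))" for \<omega>
    using abs_F_le[of "a \<omega>"] by (simp add: power2_eq_square)
qed

lemma integral_comp_diff_le:
  assumes a: "a \<in> L2 M M" and a': "a' \<in> L2 M M"
  shows "\<bar>(\<integral>\<omega>. F (a \<omega>) \<partial>M) - (\<integral>\<omega>. F (a' \<omega>) \<partial>M)\<bar>
      \<le> K * ((1 + L2norm M a + L2norm M a') * L2norm M (\<lambda>\<omega>. a \<omega> - a' \<omega>))"
proof -
  have g: "(\<lambda>\<omega>. 1 + norm (a \<omega>) + norm (a' \<omega>)) \<in> L2 M M"
    and ng: "L2norm M (\<lambda>\<omega>. 1 + norm (a \<omega>) + norm (a' \<omega>)) \<le> 1 + L2norm M a + L2norm M a'"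
    using L2_add[OF L2_one_plus_norm(1)[OF a] L2_norm[OF a']] L2_one_plus_norm(2)[OF a] by auto
  have m: "(\<lambda>\<omega>. F (a \<omega>) - F (a' \<omega>)) \<in> borel_measurable M"
    using a a' by (intro borel_measurable_diff borel_measurable_F_comp) (auto simp: L2_def)
  note ip = L2_product_bound[OF g L2_norm[OF L2_diff(1)[OF a a']] m abs_F_diff_le]
  have "\<bar>(\<integral>\<omega>. F (a \<omega>) \<partial>M) - (\<integral>\<omega>. F (a' \<omega>) \<partial>M)\<bar> = \<bar>\<integral>\<omega>. F (a \<omega>) - F (a' \<omega>) \<partial>M\<bar>"
    using integrable_comp[OF a] integrable_comp[OF a'] by simp
  also have "\<dots> \<le> (\<integral>\<omega>. \<bar>F (a \<omega>) - F (a' \<omega>)\<bar> \<partial>M)"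
    by (rule integral_abs_bound)
  also have "\<dots> \<le> K * (L2norm M (\<lambda>\<omega>. 1 + norm (a \<omega>) + norm (a' \<omega>)) * L2norm M (\<lambda>\<omega>. a \<omega> - a' \<omega>))"
    using ip(2) K_nonneg by simp
  also have "\<dots> \<le> K * ((1 + L2norm M a + L2norm M a') * L2norm M (\<lambda>\<omega>. a \<omega> - a' \<omega>))"
    by (intro mult_left_mono mult_right_mono ng K_nonneg L2norm_nonneg)
  finally show ?thesis .
qed

lemma integrable_DF_apply:
  assumes a: "a \<in> L2 M M" and h: "h \<in> L2 M M"
  shows "integrable M (\<lambda>\<omega>. DF (a \<omega>) (h \<omega>))"
    and "\<bar>\<integral>\<omega>. DF (a \<omega>) (h \<omega>) \<partial>M\<bar> \<le> K * ((1 + L2norm M a) * L2norm M h)"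
proof -
  have m: "(\<lambda>\<omega>. DF (a \<omega>) (h \<omega>)) \<in> borel_measurable M"
    using a h by (intro borel_measurable_DF_apply) (auto simp: L2_def)
  note ip = L2_product_bound[OF L2_one_plus_norm(1)[OF a] L2_norm[OF h] m abs_DF_apply_le]
  show "integrable M (\<lambda>\<omega>. DF (a \<omega>) (h \<omega>))" by (rule ip(1))
  have "\<bar>\<integral>\<omega>. DF (a \<omega>) (h \<omega>) \<partial>M\<bar> \<le> (\<integral>\<omega>. \<bar>DF (a \<omega>) (h \<omega>)\<bar> \<partial>M)"
    by (rule integral_abs_bound)
  also have "\<dots> \<le> K * (L2norm M (\<lambda>\<omega>. 1 + norm (a \<omega>)) * L2norm M h)"
    using ip(2) K_nonneg by simp
  also have "\<dots> \<le> K * ((1 + L2norm M a) * L2norm M h)"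
    by (intro mult_left_mono mult_right_mono L2_one_plus_norm(2)[OF a] K_nonneg L2norm_nonneg)
  finally show "\<bar>\<integral>\<omega>. DF (a \<omega>) (h \<omega>) \<partial>M\<bar> \<le> K * ((1 + L2norm M a) * L2norm M h)" .
qed

lemma integral_difference_quotient_tendsto:
  assumes a: "a \<in> L2 M M" and h: "h \<in> L2 M M"
  shows "((\<lambda>t. ((\<integral>\<omega>. F (a \<omega> + t *\<^sub>R h \<omega>) \<partial>M) - (\<integral>\<omega>. F (a \<omega>) \<partial>M)) / t)
           \<longlongrightarrow> (\<integral>\<omega>. DF (a \<omega>) (h \<omega>) \<partial>M)) (at 0)"
proof -
  have am: "a \<in> borel_measurable M" "h \<in> borel_measurable M" using a h by (auto simp: L2_def)
  define Q where "Q = (\<lambda>t \<omega>. (F (a \<omega> + t *\<^sub>R h \<omega>) - F (a \<omega>)) / t - DF (a \<omega>) (h \<omega>))"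
  have gL: "(\<lambda>\<omega>. 1 + 2 * norm (a \<omega>) + norm (h \<omega>)) \<in> L2 M M"
    using L2_add(1)[OF L2_add(1)[OF L2_const[of "1::real"] L2_scaleR(1)[OF L2_norm[OF a], of 2]] L2_norm[OF h]]
    by simp
  have "((\<lambda>t. \<integral>\<omega>. Q t \<omega> \<partial>M) \<longlongrightarrow> 0) (at 0)"
  proof (rule integral_dominated_convergence_at_0)
    show "Q t \<in> borel_measurable M" for t
      using borel_measurable_difference_quotient[OF am, of t] by (simp add: Q_def divide_inverse mult.commute)
    show "integrable M (\<lambda>\<omega>. 2 * K * ((1 + 2 * norm (a \<omega>) + norm (h \<omega>)) * norm (h \<omega>)))"
      using Cauchy_Schwarz_L2(1)[OF gL L2_norm[OF h]] by simp
    fix \<omega>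
    show "((\<lambda>t. Q t \<omega>) \<longlongrightarrow> 0) (at 0)"
      using difference_quotient_tendsto[of "a \<omega>" "h \<omega>"]
      by (auto simp: Q_def divide_inverse mult.commute intro: LIM_zero)
    show "\<bar>Q t \<omega>\<bar> \<le> 2 * K * ((1 + 2 * norm (a \<omega>) + norm (h \<omega>)) * norm (h \<omega>))"
      if "t \<noteq> 0" "\<bar>t\<bar> < 1" for t
      unfolding Q_def by (rule abs_difference_quotient_le[OF that])
  qed
  moreover have "(\<integral>\<omega>. Q t \<omega> \<partial>M)
      = ((\<integral>\<omega>. F (a \<omega> + t *\<^sub>R h \<omega>) \<partial>M) - (\<integral>\<omega>. F (a \<omega>) \<partial>M)) / t - (\<integral>\<omega>. DF (a \<omega>) (h \<omega>) \<partial>M)" for t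
  proof -
    have "integrable M (\<lambda>\<omega>. F (a \<omega> + t *\<^sub>R h \<omega>))"
      by (rule integrable_comp[OF L2_add(1)[OF a L2_scaleR(1)[OF h]]])
    then show ?thesis
      using integrable_comp[OF a] integrable_DF_apply(1)[OF a h] by (simp add: Q_def diff_divide_distrib)
  qed
  ultimately show ?thesis by (simp add: LIM_zero_iff)
qed

end

end

lemma C1_quadratic_growth_of_partials:
  fixes F :: "'x::euclidean_space \<Rightarrow> 'y::euclidean_space \<Rightarrow> real"
    and D :: "'x \<Rightarrow> 'y \<Rightarrow> ('x \<times> 'y) \<Rightarrow>\<^sub>L real"
  assumes "\<forall>x u. ((\<lambda>p. F (fst p) (snd p)) has_derivative D x u) (at (x, u))"
    and "continuous_on UNIV (\<lambda>p. D (fst p) (snd p))"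
    and "\<forall>x u. onorm (\<lambda>z. D x u (z, 0)) + onorm (\<lambda>v. D x u (0, v)) \<le> c * (1 + norm x + norm u)"
    and "\<forall>x u. \<bar>F x u\<bar> \<le> c * (1 + norm x + norm u)\<^sup>2"
  shows "C1_quadratic_growth (\<lambda>p. F (fst p) (snd p)) (\<lambda>p. D (fst p) (snd p)) (4 * c)"
proof unfold_locales
  fix p :: "'x \<times> 'y"
  have "norm (D 0 0) \<le> c * (1 + norm (0::'x) + norm (0::'y))"
    using assms(3)[rule_format, of 0 0] by (rule norm_blinfun_le_of_partials)
  from order_trans[OF norm_ge_zero this] have c: "c \<ge> 0" by simp
  have le2: "1 + norm (fst p) + norm (snd p) \<le> 2 * (1 + norm p)"
    using norm_fst_le[of "fst p" "snd p"] norm_snd_le[of "snd p" "fst p"] by simp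
  show "((\<lambda>p. F (fst p) (snd p)) has_derivative D (fst p) (snd p)) (at p)"
    using assms(1) by (cases p) simp
  have "norm (D (fst p) (snd p)) \<le> c * (1 + norm (fst p) + norm (snd p))"
    using assms(3) by (intro norm_blinfun_le_of_partials) simp
  also have "\<dots> \<le> c * (2 * (1 + norm p))"
    by (rule mult_left_mono[OF le2 c])
  also have "\<dots> \<le> 4 * c * (1 + norm p)"
    using mult_nonneg_nonneg[OF c, of "1 + norm p"] by (simp add: algebra_simps)
  finally show "norm (D (fst p) (snd p)) \<le> 4 * c * (1 + norm p)" .
  have "\<bar>F (fst p) (snd p)\<bar> \<le> c * (1 + norm (fst p) + norm (snd p))\<^sup>2"
    using assms(4) by simp
  also have "\<dots> \<le> c * (2 * (1 + norm p))\<^sup>2"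
    by (intro mult_left_mono power_mono le2 c) simp
  also have "\<dots> = 4 * c * (1 + norm p)\<^sup>2"
    by (simp only: power_mult_distrib) simp
  finally show "\<bar>F (fst p) (snd p)\<bar> \<le> 4 * c * (1 + norm p)\<^sup>2" .
qed (rule assms(2))

lemma C1_quadratic_growth_mono:
  assumes "C1_quadratic_growth F DF K" "K \<le> K'"
  shows "C1_quadratic_growth F DF K'"
proof -
  interpret C1_quadratic_growth F DF K by (rule assms(1))
  show ?thesis
  proof unfold_locales
    fix p
    show "norm (DF p) \<le> K' * (1 + norm p)"
      using norm_DF_le[of p] mult_right_mono[OF assms(2), of "1 + norm p"] by simp
    show "\<bar>F p\<bar> \<le> K' * (1 + norm p)\<^sup>2"
      using abs_F_le[of p] mult_right_mono[OF assms(2), of "(1 + norm p)\<^sup>2"] by simp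
  qed
qed

section \<open>The noise, its filtration and the spaces \<open>X\<^sub>k\<close>\<close>

lemma borel_measurable_vec_nth_comp [measurable (raw)]:
  "f \<in> borel_measurable M \<Longrightarrow> (\<lambda>x. (f x :: real^'n) $ i) \<in> borel_measurable M"
  by (rule measurable_compose[OF _ borel_measurable_nth])

locale driving_noise = prob_space M for M :: "'a measure" +
  fixes w :: "nat \<Rightarrow> 'a \<Rightarrow> real^'d" and N :: nat
  assumes w_0: "w 0 = (\<lambda>\<omega>. 0)"
    and w_measurable: "k \<in> {1..N} \<Longrightarrow> w k \<in> borel_measurable M"
    and w_indep: "indep_vars (\<lambda>_. borel) w {1..N}"
    and integrable_w_sq: "k \<in> {1..N} \<Longrightarrow> integrable M (\<lambda>\<omega>. (w k \<omega> $ i)\<^sup>2)"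
    and integral_w_sq: "k \<in> {1..N} \<Longrightarrow> (\<integral>\<omega>. (w k \<omega> $ i)\<^sup>2 \<partial>M) = 1"
begin

abbreviation noise_events :: "nat \<Rightarrow> 'a set set" where
  "noise_events k \<equiv> {w k -` A \<inter> space M | A. A \<in> sets (borel :: (real^'d) measure)}"

lemma space_filt [simp]: "space (filt M w k) = space M"
  by (simp add: filt_def space_measure_of_conv)

lemma sets_filt: "sets (filt M w k) = sigma_sets (space M) (\<Union>i\<in>{0..k}. noise_events i)"
  unfolding filt_def by (rule sets_measure_of) auto

lemma w_measurable_M: "k \<le> N \<Longrightarrow> w k \<in> borel_measurable M"
  using w_measurable w_0 by (cases k) auto

lemma sets_filt_subset: "k \<le> N \<Longrightarrow> sets (filt M w k) \<subseteq> sets M"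
  unfolding sets_filt by (rule sets.sigma_sets_subset) (auto intro!: measurable_sets w_measurable_M)

lemma sets_filt_mono: "j \<le> k \<Longrightarrow> sets (filt M w j) \<subseteq> sets (filt M w k)"
  unfolding sets_filt by (rule sigma_sets_mono'[OF UN_mono]) auto

lemma measurable_filt_mono: "f \<in> borel_measurable (filt M w j) \<Longrightarrow> j \<le> k \<Longrightarrow> f \<in> borel_measurable (filt M w k)"
  by (rule measurable_from_subalg[of _ "filt M w j"]) (auto simp: subalgebra_def sets_filt_mono)

lemma measurable_filt_M: "f \<in> borel_measurable (filt M w k) \<Longrightarrow> k \<le> N \<Longrightarrow> f \<in> borel_measurable M"
  by (rule measurable_from_subalg[of _ "filt M w k"]) (auto simp: subalgebra_def sets_filt_subset)

lemma w_measurable_filt: "j \<le> k \<Longrightarrow> w j \<in> borel_measurable (filt M w k)"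
proof -
  have "w j \<in> borel_measurable (filt M w j)"
    unfolding measurable_def
  proof (intro CollectI conjI ballI)
    fix A :: "(real^'d) set" assume "A \<in> sets borel"
    then have "w j -` A \<inter> space M \<in> (\<Union>i\<in>{0..j}. noise_events i)"
      by (intro UN_I[of j]) auto
    then show "w j -` A \<inter> space (filt M w j) \<in> sets (filt M w j)"
      unfolding sets_filt by auto
  qed simp
  then show "j \<le> k \<Longrightarrow> ?thesis" by (rule measurable_filt_mono)
qed

lemma L2_filt_M: "f \<in> L2 M (filt M w k) \<Longrightarrow> k \<le> N \<Longrightarrow> f \<in> L2 M M"
  by (auto simp: L2_def intro: measurable_filt_M)

lemma L2_filt_lincomb:
  assumes "k \<le> N" "f \<in> L2 M (filt M w k)" "g \<in> L2 M (filt M w k)"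
  shows "(\<lambda>\<omega>. a *\<^sub>R f \<omega> + c *\<^sub>R g \<omega>) \<in> L2 M (filt M w k)"
proof (rule L2I)
  show "(\<lambda>\<omega>. a *\<^sub>R f \<omega> + c *\<^sub>R g \<omega>) \<in> borel_measurable (filt M w k)"
    using assms by (auto simp: L2_def)
  show "(\<lambda>\<omega>. a *\<^sub>R f \<omega> + c *\<^sub>R g \<omega>) \<in> L2 M M"
    using assms by (intro L2_add(1) L2_scaleR(1) L2_filt_M)
qed

lemma sets_filt_subset_sigma_noise:
  "sets (filt M w j) \<subseteq> sigma_sets (space M) (\<Union>i\<in>{1..j}. noise_events i)"
  unfolding sets_filt
proof (rule sigma_sets_mono, safe)
  fix i A assume i: "i \<in> {0..j}" and A: "A \<in> sets (borel :: (real^'d) measure)"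
  show "w i -` A \<inter> space M \<in> sigma_sets (space M) (\<Union>i\<in>{1..j}. noise_events i)"
  proof (cases "i = 0")
    case True
    then have "w i -` A \<inter> space M = space M \<or> w i -` A \<inter> space M = {}" using w_0 by auto
    then show ?thesis by (auto intro: sigma_sets_top sigma_sets.Empty)
  next
    case False
    then have "w i -` A \<inter> space M \<in> (\<Union>i\<in>{1..j}. noise_events i)"
      using i A by (intro UN_I[of i]) auto
    then show ?thesis by (rule sigma_sets.Basic)
  qed
qed

lemma indep_sets_past_next_noise:
  assumes "j < N"
  shows "indep_sets (\<lambda>b. sigma_sets (space M) (\<Union>i\<in>(if b then {1..j} else {Suc j}). noise_events i)) UNIV"
proof (rule indep_sets_collect_sigma)
  have "indep_sets noise_events {1..N}"
    using w_indep by (simp add: indep_vars_def2)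
  then show "indep_sets noise_events (\<Union>b. if b then {1..j} else {Suc j})"
    by (rule indep_sets_mono_index[rotated]) (use assms in auto)
  show "Int_stable (noise_events i)" for i
  proof (rule Int_stableI)
    fix X Y assume "X \<in> noise_events i" "Y \<in> noise_events i"
    then obtain A B where "A \<in> sets borel" "B \<in> sets borel"
      and "X = w i -` A \<inter> space M" "Y = w i -` B \<inter> space M" by auto
    then show "X \<inter> Y \<in> noise_events i"
      by (intro CollectI exI[of _ "A \<inter> B"]) auto
  qed
qed (auto simp: disjoint_family_on_def)

lemma indep_var_filt_noise:
  fixes f :: "'a \<Rightarrow> real" and g :: "real^'d \<Rightarrow> real"
  assumes j: "j < N" and f: "f \<in> borel_measurable (filt M w j)" and g: "g \<in> borel_measurable borel"
  shows "indep_var borel f borel (\<lambda>\<omega>. g (w (Suc j) \<omega>))"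
proof -
  have "{f -` A \<inter> space M | A. A \<in> sets borel} \<subseteq> sets (filt M w j)"
    using measurable_sets[OF f] by auto
  then have "sigma_sets (space M) {f -` A \<inter> space M | A. A \<in> sets borel}
      \<subseteq> sigma_sets (space M) (\<Union>i\<in>{1..j}. noise_events i)"
    by (rule sigma_sets_mono[OF order_trans[OF _ sets_filt_subset_sigma_noise]])
  moreover have "sigma_sets (space M) {(\<lambda>\<omega>. g (w (Suc j) \<omega>)) -` A \<inter> space M | A. A \<in> sets borel}
      \<subseteq> sigma_sets (space M) (\<Union>i\<in>{Suc j}. noise_events i)"
  proof (rule sigma_sets_mono', safe)
    fix A :: "real set" assume "A \<in> sets borel"
    then have "g -` A \<in> sets borel" using measurable_sets[OF g] by simp
    then show "(\<lambda>\<omega>. g (w (Suc j) \<omega>)) -` A \<inter> space M \<in> (\<Union>i\<in>{Suc j}. noise_events i)"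
      by (auto simp: vimage_def)
  qed
  moreover have "random_variable borel f"
    using measurable_filt_M[OF f] j by simp
  moreover have "random_variable borel (\<lambda>\<omega>. g (w (Suc j) \<omega>))"
    using g w_measurable_M[of "Suc j"] j by simp
  ultimately show ?thesis
    unfolding indep_var_eq indep_set_def
    by (intro conjI indep_sets_mono_sets[OF indep_sets_past_next_noise[OF j]]) (auto split: bool.split)
qed

lemma L2_w_scaleR:
  fixes Y :: "'a \<Rightarrow> 'b::euclidean_space"
  assumes j: "j < N" and Y: "Y \<in> L2 M (filt M w j)"
  shows "(\<lambda>\<omega>. w (Suc j) \<omega> $ i *\<^sub>R Y \<omega>) \<in> L2 M M"
    and "L2norm M (\<lambda>\<omega>. w (Suc j) \<omega> $ i *\<^sub>R Y \<omega>) = L2norm M Y"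
proof -
  have Ym: "Y \<in> borel_measurable (filt M w j)" and Yi: "integrable M (\<lambda>\<omega>. (norm (Y \<omega>))\<^sup>2)"
    using Y by (auto simp: L2_def)
  have [measurable]: "Y \<in> borel_measurable M" "w (Suc j) \<in> borel_measurable M"
    using measurable_filt_M[OF Ym] w_measurable_M[of "Suc j"] j by auto
  have ind: "indep_var borel (\<lambda>\<omega>. (norm (Y \<omega>))\<^sup>2) borel (\<lambda>\<omega>. (w (Suc j) \<omega> $ i)\<^sup>2)"
    by (rule indep_var_filt_noise[OF j]) (use Ym in measurable)
  have wi: "integrable M (\<lambda>\<omega>. (w (Suc j) \<omega> $ i)\<^sup>2)" "(\<integral>\<omega>. (w (Suc j) \<omega> $ i)\<^sup>2 \<partial>M) = 1"
    using integrable_w_sq integral_w_sq j by auto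
  have eq: "(\<lambda>\<omega>. (norm (w (Suc j) \<omega> $ i *\<^sub>R Y \<omega>))\<^sup>2) = (\<lambda>\<omega>. (norm (Y \<omega>))\<^sup>2 * (w (Suc j) \<omega> $ i)\<^sup>2)"
    by (simp add: fun_eq_iff power_mult_distrib)
  show "(\<lambda>\<omega>. w (Suc j) \<omega> $ i *\<^sub>R Y \<omega>) \<in> L2 M M"
    unfolding L2_def mem_Collect_eq eq by (intro conjI indep_var_integrable[OF ind Yi wi(1)]) measurable
  show "L2norm M (\<lambda>\<omega>. w (Suc j) \<omega> $ i *\<^sub>R Y \<omega>) = L2norm M Y"
    unfolding L2norm_def eq indep_var_lebesgue_integral[OF ind Yi wi(1)] wi(2) by simp
qed

definition noise_comb :: "nat \<Rightarrow> ('a \<Rightarrow> 'b::real_vector) \<Rightarrow> ('d \<Rightarrow> 'a \<Rightarrow> 'b) \<Rightarrow> 'a \<Rightarrow> 'b" where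
  "noise_comb j y0 y = (\<lambda>\<omega>. y0 \<omega> + (\<Sum>i\<in>UNIV. w (Suc j) \<omega> $ i *\<^sub>R y i \<omega>))"

lemma noise_comb_lincomb:
  "a *\<^sub>R noise_comb j y0 y \<omega> + c *\<^sub>R noise_comb j z0 z \<omega>
    = noise_comb j (\<lambda>\<omega>. a *\<^sub>R y0 \<omega> + c *\<^sub>R z0 \<omega>) (\<lambda>i \<omega>. a *\<^sub>R y i \<omega> + c *\<^sub>R z i \<omega>) \<omega>"
  by (simp add: noise_comb_def scaleR_add_right scaleR_sum_right sum.distrib algebra_simps)

lemma noise_comb_diff:
  "noise_comb j y0 y \<omega> - noise_comb j z0 z \<omega> = noise_comb j (\<lambda>\<omega>. y0 \<omega> - z0 \<omega>) (\<lambda>i \<omega>. y i \<omega> - z i \<omega>) \<omega>"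
  by (simp add: noise_comb_def scaleR_diff_right sum_subtractf)

lemma L2_noise_comb:
  fixes y0 :: "'a \<Rightarrow> 'b::euclidean_space"
  assumes j: "j < N" and y0: "y0 \<in> L2 M M" and y: "\<And>i. y i \<in> L2 M (filt M w j)"
  shows "noise_comb j y0 y \<in> L2 M M"
    and "L2norm M (noise_comb j y0 y) \<le> L2norm M y0 + (\<Sum>i\<in>UNIV. L2norm M (y i))"
proof -
  have "(\<lambda>\<omega>. \<Sum>i\<in>UNIV. w (Suc j) \<omega> $ i *\<^sub>R y i \<omega>) \<in> L2 M M
      \<and> L2norm M (\<lambda>\<omega>. \<Sum>i\<in>UNIV. w (Suc j) \<omega> $ i *\<^sub>R y i \<omega>) \<le> (\<Sum>i\<in>UNIV. L2norm M (y i))"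
    using L2_sum[of UNIV "\<lambda>i \<omega>. w (Suc j) \<omega> $ i *\<^sub>R y i \<omega>" M] L2_w_scaleR[OF j y] by simp
  then show "noise_comb j y0 y \<in> L2 M M"
    and "L2norm M (noise_comb j y0 y) \<le> L2norm M y0 + (\<Sum>i\<in>UNIV. L2norm M (y i))"
    using L2_add[OF y0, of "\<lambda>\<omega>. \<Sum>i\<in>UNIV. w (Suc j) \<omega> $ i *\<^sub>R y i \<omega>"]
    unfolding noise_comb_def by auto
qed

lemma Xsp_Suc_iff:
  "x \<in> Xsp M w (Suc j) \<longleftrightarrow> (\<exists>y0 y. y0 \<in> L2 M (filt M w j) \<and> (\<forall>i. y i \<in> L2 M (filt M w j))
      \<and> (\<forall>\<omega>\<in>space M. x \<omega> = noise_comb j y0 y \<omega>))"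
  by (simp add: Xsp_def noise_comb_def)

lemma Xsp_SucI:
  "y0 \<in> L2 M (filt M w j) \<Longrightarrow> (\<And>i. y i \<in> L2 M (filt M w j)) \<Longrightarrow> noise_comb j y0 y \<in> Xsp M w (Suc j)"
  unfolding Xsp_Suc_iff by blast

lemma Xsp_0_const: "(\<lambda>\<omega>. c) \<in> Xsp M w 0"
  by (simp add: Xsp_def)

lemma Xsp_lincomb:
  assumes k: "k \<le> N" and x: "x \<in> Xsp M w k" and y: "y \<in> Xsp M w k"
  shows "(\<lambda>\<omega>. a *\<^sub>R x \<omega> + c *\<^sub>R y \<omega>) \<in> Xsp M w k"
proof (cases k)
  case 0
  then obtain x0 y0 where "\<forall>\<omega>\<in>space M. x \<omega> = x0" "\<forall>\<omega>\<in>space M. y \<omega> = y0"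
    using x y by (auto simp: Xsp_def)
  then show ?thesis using 0 by (auto simp: Xsp_def intro!: exI[of _ "a *\<^sub>R x0 + c *\<^sub>R y0"])
next
  case (Suc j)
  obtain x0 xs where x0: "x0 \<in> L2 M (filt M w j)" and xs: "\<And>i. xs i \<in> L2 M (filt M w j)"
    and x: "\<forall>\<omega>\<in>space M. x \<omega> = noise_comb j x0 xs \<omega>"
    using x unfolding Suc Xsp_Suc_iff by blast
  obtain y0 ys where y0: "y0 \<in> L2 M (filt M w j)" and ys: "\<And>i. ys i \<in> L2 M (filt M w j)"
    and y: "\<forall>\<omega>\<in>space M. y \<omega> = noise_comb j y0 ys \<omega>"
    using y unfolding Suc Xsp_Suc_iff by blast
  have j: "j \<le> N" using k Suc by simp
  show ?thesis
    unfolding Suc Xsp_Suc_iff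
  proof (intro exI conjI allI ballI)
    show "(\<lambda>\<omega>. a *\<^sub>R x0 \<omega> + c *\<^sub>R y0 \<omega>) \<in> L2 M (filt M w j)"
      by (rule L2_filt_lincomb[OF j x0 y0])
    show "(\<lambda>\<omega>. a *\<^sub>R xs i \<omega> + c *\<^sub>R ys i \<omega>) \<in> L2 M (filt M w j)" for i
      by (rule L2_filt_lincomb[OF j xs ys])
    show "a *\<^sub>R x \<omega> + c *\<^sub>R y \<omega>
        = noise_comb j (\<lambda>\<omega>. a *\<^sub>R x0 \<omega> + c *\<^sub>R y0 \<omega>) (\<lambda>i \<omega>. a *\<^sub>R xs i \<omega> + c *\<^sub>R ys i \<omega>) \<omega>"
      if "\<omega> \<in> space M" for \<omega>
      using x y that by (simp add: noise_comb_lincomb)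
  qed
qed

lemma Xsp_diff:
  assumes "k \<le> N" "x \<in> Xsp M w k" "y \<in> Xsp M w k"
  shows "(\<lambda>\<omega>. x \<omega> - y \<omega>) \<in> Xsp M w k"
  using Xsp_lincomb[OF assms, of 1 "-1"] by simp

lemma L2_filt_noise_comb:
  assumes j: "j < N" and y0: "y0 \<in> L2 M (filt M w j)" and y: "\<And>i. y i \<in> L2 M (filt M w j)"
  shows "noise_comb j y0 y \<in> L2 M (filt M w (Suc j))"
proof (rule L2I)
  have [measurable]: "y0 \<in> borel_measurable (filt M w (Suc j))"
    using y0 by (auto simp: L2_def intro: measurable_filt_mono)
  have [measurable]: "y i \<in> borel_measurable (filt M w (Suc j))" for i
    using y[of i] by (auto simp: L2_def intro: measurable_filt_mono)
  have [measurable]: "w (Suc j) \<in> borel_measurable (filt M w (Suc j))"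
    by (rule w_measurable_filt) simp
  show "noise_comb j y0 y \<in> borel_measurable (filt M w (Suc j))"
    unfolding noise_comb_def by measurable
  show "noise_comb j y0 y \<in> L2 M M"
    using L2_noise_comb(1)[OF j L2_filt_M[OF y0] y] j by simp
qed

lemma Xsp_imp_L2:
  assumes k: "k \<le> N" and x: "x \<in> Xsp M w k"
  shows "x \<in> L2 M (filt M w k)"
proof (cases k)
  case 0
  then obtain c where c: "\<forall>\<omega>\<in>space M. x \<omega> = c" using x by (auto simp: Xsp_def)
  have "(\<lambda>\<omega>. c) \<in> L2 M (filt M w k)" by (simp add: L2_def)
  then show ?thesis by (rule L2_cong) (use c in simp_all)
next
  case (Suc j)
  obtain y0 y where y0: "y0 \<in> L2 M (filt M w j)" and y: "\<And>i. y i \<in> L2 M (filt M w j)"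
    and x: "\<forall>\<omega>\<in>space M. x \<omega> = noise_comb j y0 y \<omega>"
    using x unfolding Suc Xsp_Suc_iff by blast
  have "j < N" using k Suc by simp
  from L2_filt_noise_comb[OF this y0 y] show ?thesis
    unfolding Suc by (rule L2_cong) (use x in simp_all)
qed

lemma Dom_iff: "p \<in> Dom M w N \<longleftrightarrow> (\<forall>k\<le>N. fst p k \<in> Xsp M w k) \<and> (\<forall>k<N. snd p k \<in> L2 M (filt M w k))"
  by (cases p) (simp add: Dom_def)

lemma Dom_plincomb:
  assumes "p \<in> Dom M w N" "q \<in> Dom M w N"
  shows "plincomb a p c q \<in> Dom M w N"
  using assms unfolding Dom_iff plincomb_def lincomb_def
  by (auto intro: Xsp_lincomb L2_filt_lincomb)

end

section \<open>The constraint map and the cost functional\<close>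

lemma normX_diff: "normX M N (lincomb 1 f (-1) g) = (\<Sum>k\<le>N. L2norm M (\<lambda>\<omega>. f k \<omega> - g k \<omega>))"
  by (simp add: normX_def lincomb_def)

lemma normXU_diff: "normXU M N (plincomb 1 p (-1) q) =
   (\<Sum>k\<le>N. L2norm M (\<lambda>\<omega>. fst p k \<omega> - fst q k \<omega>)) + (\<Sum>k<N. L2norm M (\<lambda>\<omega>. snd p k \<omega> - snd q k \<omega>))"
  by (simp add: normXU_def plincomb_def lincomb_def)

locale control_problem = driving_noise M w N
  for M :: "'a measure" and w :: "nat \<Rightarrow> 'a \<Rightarrow> real^'d" and N :: nat +
  fixes b :: "nat \<Rightarrow> real^'n \<Rightarrow> real^'m \<Rightarrow> real^'n"
    and Db :: "nat \<Rightarrow> real^'n \<Rightarrow> real^'m \<Rightarrow> ((real^'n) \<times> (real^'m)) \<Rightarrow>\<^sub>L (real^'n)"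
    and sig :: "nat \<Rightarrow> 'd \<Rightarrow> real^'n \<Rightarrow> real^'m \<Rightarrow> real^'n"
    and Dsig :: "nat \<Rightarrow> 'd \<Rightarrow> real^'n \<Rightarrow> real^'m \<Rightarrow> ((real^'n) \<times> (real^'m)) \<Rightarrow>\<^sub>L (real^'n)"
    and ell :: "nat \<Rightarrow> real^'n \<Rightarrow> real^'m \<Rightarrow> real"
    and Dell :: "nat \<Rightarrow> real^'n \<Rightarrow> real^'m \<Rightarrow> ((real^'n) \<times> (real^'m)) \<Rightarrow>\<^sub>L real"
    and Phi :: "real^'n \<Rightarrow> real" and DPhi :: "real^'n \<Rightarrow> (real^'n) \<Rightarrow>\<^sub>L real"
    and c K :: real
  assumes c_nonneg: "0 \<le> c"
    and b: "k < N \<Longrightarrow> C1_bounded_deriv (\<lambda>p. b k (fst p) (snd p)) (\<lambda>p. Db k (fst p) (snd p)) c"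
    and sig: "k < N \<Longrightarrow> C1_bounded_deriv (\<lambda>p. sig k i (fst p) (snd p)) (\<lambda>p. Dsig k i (fst p) (snd p)) c"
    and ell: "k < N \<Longrightarrow> C1_quadratic_growth (\<lambda>p. ell k (fst p) (snd p)) (\<lambda>p. Dell k (fst p) (snd p)) K"
    and Phi: "C1_quadratic_growth Phi DPhi K"
begin

lemma K_nonneg: "0 \<le> K"
  by (rule C1_quadratic_growth.K_nonneg[OF Phi])

lemma normXU_nonneg: "normXU M N q \<ge> 0"
  by (simp add: normXU_def sum_nonneg L2norm_nonneg)

lemma L2norm_le_normXU:
  shows "k \<le> N \<Longrightarrow> L2norm M (fst q k) \<le> normXU M N q"
    and "k < N \<Longrightarrow> L2norm M (fst q k) + L2norm M (snd q k) \<le> normXU M N q"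
proof -
  have X: "k \<le> N \<Longrightarrow> L2norm M (fst q k) \<le> (\<Sum>k\<le>N. L2norm M (fst q k))"
    and U: "k < N \<Longrightarrow> L2norm M (snd q k) \<le> (\<Sum>k<N. L2norm M (snd q k))" for k
    by (auto intro!: member_le_sum L2norm_nonneg)
  have "0 \<le> (\<Sum>k<N. L2norm M (snd q k))" by (simp add: sum_nonneg L2norm_nonneg)
  then show "k \<le> N \<Longrightarrow> L2norm M (fst q k) \<le> normXU M N q"
    using X[of k] by (simp add: normXU_def)
  show "k < N \<Longrightarrow> L2norm M (fst q k) + L2norm M (snd q k) \<le> normXU M N q"
    using X[of k] U[of k] by (simp add: normXU_def)
qed

lemma Dom_state:
  assumes "p \<in> Dom M w N" "k \<le> N"
  shows "fst p k \<in> Xsp M w k" and "fst p k \<in> L2 M (filt M w k)" and "fst p k \<in> L2 M M"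
proof -
  show x: "fst p k \<in> Xsp M w k" using assms by (simp add: Dom_iff)
  show "fst p k \<in> L2 M (filt M w k)" by (rule Xsp_imp_L2[OF assms(2) x])
  then show "fst p k \<in> L2 M M" by (rule L2_filt_M[OF _ assms(2)])
qed

lemma Dom_control:
  assumes "p \<in> Dom M w N" "k < N"
  shows "snd p k \<in> L2 M (filt M w k)" and "snd p k \<in> L2 M M"
proof -
  show u: "snd p k \<in> L2 M (filt M w k)" using assms by (simp add: Dom_iff)
  show "snd p k \<in> L2 M M" using L2_filt_M[OF u] assms(2) by simp
qed

lemma Dom_state_control:
  assumes "p \<in> Dom M w N" "k < N"
  shows "(\<lambda>\<omega>. (fst p k \<omega>, snd p k \<omega>)) \<in> borel_measurable (filt M w k)"
    and "(\<lambda>\<omega>. (fst p k \<omega>, snd p k \<omega>)) \<in> L2 M M"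
    and "L2norm M (\<lambda>\<omega>. (fst p k \<omega>, snd p k \<omega>)) \<le> normXU M N p"
proof -
  have k: "k \<le> N" using assms(2) by simp
  note x = Dom_state[OF assms(1) k] and u = Dom_control[OF assms]
  have [measurable]: "fst p k \<in> borel_measurable (filt M w k)" "snd p k \<in> borel_measurable (filt M w k)"
    using x(2) u(1) by (simp_all add: L2_def)
  show "(\<lambda>\<omega>. (fst p k \<omega>, snd p k \<omega>)) \<in> borel_measurable (filt M w k)"
    by measurable
  show "(\<lambda>\<omega>. (fst p k \<omega>, snd p k \<omega>)) \<in> L2 M M"
    by (rule L2_Pair(1)[OF x(3) u(2)])
  show "L2norm M (\<lambda>\<omega>. (fst p k \<omega>, snd p k \<omega>)) \<le> normXU M N p"
    using L2_Pair(2)[OF x(3) u(2)] L2norm_le_normXU(2)[OF assms(2), of p] by linarith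
qed

lemma Dom_state_control_diff:
  assumes "p \<in> Dom M w N" "q \<in> Dom M w N" "k < N"
  shows "L2norm M (\<lambda>\<omega>. (fst p k \<omega>, snd p k \<omega>) - (fst q k \<omega>, snd q k \<omega>))
      \<le> L2norm M (\<lambda>\<omega>. fst p k \<omega> - fst q k \<omega>) + L2norm M (\<lambda>\<omega>. snd p k \<omega> - snd q k \<omega>)"
proof -
  have k: "k \<le> N" using assms(3) by simp
  show ?thesis
    using L2_Pair(2)[OF L2_diff(1)[OF Dom_state(3)[OF assms(1) k] Dom_state(3)[OF assms(2) k]]
        L2_diff(1)[OF Dom_control(2)[OF assms(1,3)] Dom_control(2)[OF assms(2,3)]]]
    by simp
qed

context
  fixes f :: "real^'n \<Rightarrow> real^'m \<Rightarrow> 'z::euclidean_space"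
    and Df :: "real^'n \<Rightarrow> real^'m \<Rightarrow> ((real^'n) \<times> (real^'m)) \<Rightarrow>\<^sub>L 'z"
  assumes f: "C1_bounded_deriv (\<lambda>p. f (fst p) (snd p)) (\<lambda>p. Df (fst p) (snd p)) c"
begin

interpretation f: C1_bounded_deriv "\<lambda>p. f (fst p) (snd p)" "\<lambda>p. Df (fst p) (snd p)" c
  by (rule f)

lemma coefficient_L2:
  assumes p: "p \<in> Dom M w N" and j: "j < N"
  shows "(\<lambda>\<omega>. f (fst p j \<omega>) (snd p j \<omega>)) \<in> L2 M (filt M w j)"
proof (rule L2I)
  note a = Dom_state_control[OF p j]
  show "(\<lambda>\<omega>. f (fst p j \<omega>) (snd p j \<omega>)) \<in> borel_measurable (filt M w j)"
    using f.borel_measurable_F_comp[OF a(1)] by simp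
  show "(\<lambda>\<omega>. f (fst p j \<omega>) (snd p j \<omega>)) \<in> L2 M M"
    using f.L2_comp[OF finite_measure_axioms a(2)] by simp
qed

lemma coefficient_diff_L2:
  assumes p: "p \<in> Dom M w N" and q: "q \<in> Dom M w N" and j: "j < N"
  shows "(\<lambda>\<omega>. f (fst p j \<omega>) (snd p j \<omega>) - f (fst q j \<omega>) (snd q j \<omega>)) \<in> L2 M (filt M w j)"
    and "L2norm M (\<lambda>\<omega>. f (fst p j \<omega>) (snd p j \<omega>) - f (fst q j \<omega>) (snd q j \<omega>))
      \<le> c * (L2norm M (\<lambda>\<omega>. fst p j \<omega> - fst q j \<omega>) + L2norm M (\<lambda>\<omega>. snd p j \<omega> - snd q j \<omega>))"
proof -
  show "(\<lambda>\<omega>. f (fst p j \<omega>) (snd p j \<omega>) - f (fst q j \<omega>) (snd q j \<omega>)) \<in> L2 M (filt M w j)"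
    using L2_filt_lincomb[OF _ coefficient_L2[OF p j] coefficient_L2[OF q j], of 1 "-1"] j by simp
  have "L2norm M (\<lambda>\<omega>. f (fst p j \<omega>) (snd p j \<omega>) - f (fst q j \<omega>) (snd q j \<omega>))
      \<le> c * L2norm M (\<lambda>\<omega>. (fst p j \<omega>, snd p j \<omega>) - (fst q j \<omega>, snd q j \<omega>))"
    using f.L2_comp_diff(2)[OF Dom_state_control(2)[OF p j] Dom_state_control(2)[OF q j]] by simp
  also have "\<dots> \<le> c * (L2norm M (\<lambda>\<omega>. fst p j \<omega> - fst q j \<omega>) + L2norm M (\<lambda>\<omega>. snd p j \<omega> - snd q j \<omega>))"
    by (rule mult_left_mono[OF Dom_state_control_diff[OF p q j] c_nonneg])
  finally show "L2norm M (\<lambda>\<omega>. f (fst p j \<omega>) (snd p j \<omega>) - f (fst q j \<omega>) (snd q j \<omega>))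
      \<le> c * (L2norm M (\<lambda>\<omega>. fst p j \<omega> - fst q j \<omega>) + L2norm M (\<lambda>\<omega>. snd p j \<omega> - snd q j \<omega>))" .
qed

lemma coefficient_deriv_L2:
  assumes p: "p \<in> Dom M w N" and q: "q \<in> Dom M w N" and j: "j < N"
  shows "(\<lambda>\<omega>. Df (fst p j \<omega>) (snd p j \<omega>) (fst q j \<omega>, snd q j \<omega>)) \<in> L2 M (filt M w j)"
    and "L2norm M (\<lambda>\<omega>. Df (fst p j \<omega>) (snd p j \<omega>) (fst q j \<omega>, snd q j \<omega>))
      \<le> c * (L2norm M (fst q j) + L2norm M (snd q j))"
proof -
  note a = Dom_state_control[OF p j] and h = Dom_state_control[OF q j]
  have am: "(\<lambda>\<omega>. (fst p j \<omega>, snd p j \<omega>)) \<in> borel_measurable M"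
    using a(2) by (simp add: L2_def)
  show "(\<lambda>\<omega>. Df (fst p j \<omega>) (snd p j \<omega>) (fst q j \<omega>, snd q j \<omega>)) \<in> L2 M (filt M w j)"
  proof (rule L2I)
    show "(\<lambda>\<omega>. Df (fst p j \<omega>) (snd p j \<omega>) (fst q j \<omega>, snd q j \<omega>)) \<in> borel_measurable (filt M w j)"
      using f.borel_measurable_DF_apply[OF a(1) h(1)] by simp
    show "(\<lambda>\<omega>. Df (fst p j \<omega>) (snd p j \<omega>) (fst q j \<omega>, snd q j \<omega>)) \<in> L2 M M"
      using f.L2_DF_apply(1)[OF am h(2)] by simp
  qed
  have "L2norm M (\<lambda>\<omega>. Df (fst p j \<omega>) (snd p j \<omega>) (fst q j \<omega>, snd q j \<omega>))
      \<le> c * L2norm M (\<lambda>\<omega>. (fst q j \<omega>, snd q j \<omega>))"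
    using f.L2_DF_apply(2)[OF am h(2)] by simp
  also have "\<dots> \<le> c * (L2norm M (fst q j) + L2norm M (snd q j))"
    using L2_Pair(2)[OF Dom_state(3)[OF q] Dom_control(2)[OF q j]] j by (intro mult_left_mono c_nonneg) auto
  finally show "L2norm M (\<lambda>\<omega>. Df (fst p j \<omega>) (snd p j \<omega>) (fst q j \<omega>, snd q j \<omega>))
      \<le> c * (L2norm M (fst q j) + L2norm M (snd q j))" .
qed

lemma coefficient_quotient_L2:
  assumes p: "p \<in> Dom M w N" and q: "q \<in> Dom M w N" and j: "j < N"
  defines "Q \<equiv> \<lambda>t \<omega>. (f (fst p j \<omega> + t *\<^sub>R fst q j \<omega>) (snd p j \<omega> + t *\<^sub>R snd q j \<omega>)
      - f (fst p j \<omega>) (snd p j \<omega>)) /\<^sub>R t - Df (fst p j \<omega>) (snd p j \<omega>) (fst q j \<omega>, snd q j \<omega>)"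
  shows "Q t \<in> L2 M (filt M w j)" and "((\<lambda>t. L2norm M (Q t)) \<longlongrightarrow> 0) (at 0)"
proof -
  note a = Dom_state_control[OF p j] and h = Dom_state_control[OF q j]
  have am: "(\<lambda>\<omega>. (fst p j \<omega>, snd p j \<omega>)) \<in> borel_measurable M"
    using a(2) by (simp add: L2_def)
  note r = f.L2_difference_quotient[OF am h(2)]
  show "Q t \<in> L2 M (filt M w j)"
  proof (rule L2I)
    show "Q t \<in> borel_measurable (filt M w j)"
      using f.borel_measurable_difference_quotient[OF a(1) h(1), of t] by (simp add: Q_def)
    show "Q t \<in> L2 M M"
      using r(1)[of t] by (simp add: Q_def)
  qed
  show "((\<lambda>t. L2norm M (Q t)) \<longlongrightarrow> 0) (at 0)"
    using r(2) by (simp add: Q_def)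
qed

end

lemma gmap_0: "gmap w x0h b sig p 0 = (\<lambda>\<omega>. x0h - fst p 0 \<omega>)"
  by (simp add: gmap_def)

lemma gmap_Suc:
  "gmap w x0h b sig p (Suc j) = (\<lambda>\<omega>. noise_comb j (\<lambda>\<omega>. b j (fst p j \<omega>) (snd p j \<omega>))
     (\<lambda>i \<omega>. sig j i (fst p j \<omega>) (snd p j \<omega>)) \<omega> - fst p (Suc j) \<omega>)"
  by (simp add: gmap_def noise_comb_def)

lemma dgmap_0: "dgmap w Db Dsig p q 0 = (\<lambda>\<omega>. - fst q 0 \<omega>)"
  by (simp add: dgmap_def)

lemma dgmap_Suc:
  "dgmap w Db Dsig p q (Suc j) = (\<lambda>\<omega>. noise_comb j (\<lambda>\<omega>. Db j (fst p j \<omega>) (snd p j \<omega>) (fst q j \<omega>, snd q j \<omega>))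
     (\<lambda>i \<omega>. Dsig j i (fst p j \<omega>) (snd p j \<omega>) (fst q j \<omega>, snd q j \<omega>)) \<omega> - fst q (Suc j) \<omega>)"
  by (simp add: dgmap_def noise_comb_def)

lemma gmap_in_Xsp:
  assumes p: "p \<in> Dom M w N" and k: "k \<le> N"
  shows "gmap w x0h b sig p k \<in> Xsp M w k"
proof (cases k)
  case 0
  then show ?thesis
    using Xsp_diff[OF _ Xsp_0_const[of x0h] Dom_state(1)[OF p]] by (simp add: gmap_0)
next
  case (Suc j)
  then have j: "j < N" using k by simp
  have "noise_comb j (\<lambda>\<omega>. b j (fst p j \<omega>) (snd p j \<omega>)) (\<lambda>i \<omega>. sig j i (fst p j \<omega>) (snd p j \<omega>))
      \<in> Xsp M w (Suc j)"
    using coefficient_L2[OF b[OF j] p j] coefficient_L2[OF sig[OF j] p j] by (rule Xsp_SucI)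
  from Xsp_diff[OF _ this Dom_state(1)[OF p]] show ?thesis
    using k Suc by (simp add: gmap_Suc)
qed

lemma gmap_Suc_diff_le:
  assumes p: "p \<in> Dom M w N" and q: "q \<in> Dom M w N" and j: "j < N"
  shows "L2norm M (\<lambda>\<omega>. gmap w x0h b sig p (Suc j) \<omega> - gmap w x0h b sig q (Suc j) \<omega>)
    \<le> (1 + real CARD('d)) * c * (L2norm M (\<lambda>\<omega>. fst p j \<omega> - fst q j \<omega>) + L2norm M (\<lambda>\<omega>. snd p j \<omega> - snd q j \<omega>))
       + L2norm M (\<lambda>\<omega>. fst p (Suc j) \<omega> - fst q (Suc j) \<omega>)"
proof -
  let ?D = "L2norm M (\<lambda>\<omega>. fst p j \<omega> - fst q j \<omega>) + L2norm M (\<lambda>\<omega>. snd p j \<omega> - snd q j \<omega>)"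
  define B where "B = (\<lambda>\<omega>. b j (fst p j \<omega>) (snd p j \<omega>) - b j (fst q j \<omega>) (snd q j \<omega>))"
  define S where "S = (\<lambda>i \<omega>. sig j i (fst p j \<omega>) (snd p j \<omega>) - sig j i (fst q j \<omega>) (snd q j \<omega>))"
  define X where "X = (\<lambda>\<omega>. fst p (Suc j) \<omega> - fst q (Suc j) \<omega>)"
  note DB = coefficient_diff_L2[OF b[OF j] p q j, folded B_def]
  note DS = coefficient_diff_L2[OF sig[OF j] p q j]
  have S: "S i \<in> L2 M (filt M w j)" for i
    unfolding S_def by (rule DS(1))
  have B: "B \<in> L2 M M"
    using L2_filt_M[OF DB(1)] j by simp
  have X: "X \<in> L2 M M"
    unfolding X_def using L2_diff(1)[OF Dom_state(3)[OF p] Dom_state(3)[OF q]] j by simp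
  have "gmap w x0h b sig p (Suc j) \<omega> - gmap w x0h b sig q (Suc j) \<omega> = noise_comb j B S \<omega> - X \<omega>" for \<omega>
    using noise_comb_diff[of j _ _ \<omega>] by (simp add: gmap_Suc B_def S_def X_def)
  then have "L2norm M (\<lambda>\<omega>. gmap w x0h b sig p (Suc j) \<omega> - gmap w x0h b sig q (Suc j) \<omega>)
      = L2norm M (\<lambda>\<omega>. noise_comb j B S \<omega> - X \<omega>)" by simp
  also have "\<dots> \<le> L2norm M (noise_comb j B S) + L2norm M X"
    by (rule L2_diff(2)[OF L2_noise_comb(1)[OF j B S] X])
  also have "L2norm M (noise_comb j B S) \<le> L2norm M B + (\<Sum>i\<in>UNIV. L2norm M (S i))"
    by (rule L2_noise_comb(2)[OF j B S])
  also have "L2norm M B \<le> c * ?D"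
    by (rule DB(2))
  also have "(\<Sum>i\<in>UNIV. L2norm M (S i)) \<le> (\<Sum>i\<in>(UNIV::'d set). c * ?D)"
    by (rule sum_mono) (unfold S_def, rule DS(2))
  finally show ?thesis by (simp add: X_def algebra_simps)
qed

lemma lipschitz_gmap: "lipschitz_G M w N (gmap w x0h b sig)"
  unfolding lipschitz_G_def normX_diff normXU_diff
proof (intro exI ballI)
  fix p q :: "(nat \<Rightarrow> 'a \<Rightarrow> real^'n) \<times> (nat \<Rightarrow> 'a \<Rightarrow> real^'m)"
  assume p: "p \<in> Dom M w N" and q: "q \<in> Dom M w N"
  show "(\<Sum>k\<le>N. L2norm M (\<lambda>\<omega>. gmap w x0h b sig p k \<omega> - gmap w x0h b sig q k \<omega>))
      \<le> ((1 + real CARD('d)) * c + 1) * ((\<Sum>k\<le>N. L2norm M (\<lambda>\<omega>. fst p k \<omega> - fst q k \<omega>))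
          + (\<Sum>k<N. L2norm M (\<lambda>\<omega>. snd p k \<omega> - snd q k \<omega>)))"
  proof (rule sum_le_of_stepwise_bound[OF L2norm_nonneg L2norm_nonneg])
    show "0 \<le> (1 + real CARD('d)) * c" using c_nonneg by simp
    have "L2norm M (\<lambda>\<omega>. gmap w x0h b sig p 0 \<omega> - gmap w x0h b sig q 0 \<omega>)
        = L2norm M (\<lambda>\<omega>. - (fst p 0 \<omega> - fst q 0 \<omega>))"
      by (rule L2norm_cong) (simp add: gmap_0)
    then show "L2norm M (\<lambda>\<omega>. gmap w x0h b sig p 0 \<omega> - gmap w x0h b sig q 0 \<omega>)
        \<le> L2norm M (\<lambda>\<omega>. fst p 0 \<omega> - fst q 0 \<omega>)"
      by (simp only: L2norm_uminus order_refl)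
  qed (rule gmap_Suc_diff_le[OF p q])
qed

lemma dgmap_in_Xsp:
  assumes p: "p \<in> Dom M w N" and q: "q \<in> Dom M w N" and k: "k \<le> N"
  shows "dgmap w Db Dsig p q k \<in> Xsp M w k"
proof (cases k)
  case 0
  then show ?thesis
    using Xsp_diff[OF _ Xsp_0_const[of 0] Dom_state(1)[OF q]] by (simp add: dgmap_0)
next
  case (Suc j)
  then have j: "j < N" using k by simp
  have "noise_comb j (\<lambda>\<omega>. Db j (fst p j \<omega>) (snd p j \<omega>) (fst q j \<omega>, snd q j \<omega>))
      (\<lambda>i \<omega>. Dsig j i (fst p j \<omega>) (snd p j \<omega>) (fst q j \<omega>, snd q j \<omega>)) \<in> Xsp M w (Suc j)"
    using coefficient_deriv_L2(1)[OF b[OF j] p q j] coefficient_deriv_L2(1)[OF sig[OF j] p q j]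
    by (rule Xsp_SucI)
  from Xsp_diff[OF _ this Dom_state(1)[OF q]] show ?thesis
    using k Suc by (simp add: dgmap_Suc)
qed

lemma dgmap_plincomb:
  "dgmap w Db Dsig p (plincomb a1 q1 a2 q2) k \<omega>
    = a1 *\<^sub>R dgmap w Db Dsig p q1 k \<omega> + a2 *\<^sub>R dgmap w Db Dsig p q2 k \<omega>"
proof (cases k)
  case 0
  then show ?thesis by (simp add: dgmap_def plincomb_def lincomb_def algebra_simps)
next
  case (Suc j)
  have "(\<Sum>i\<in>UNIV. w (Suc j) \<omega> $ i *\<^sub>R Dsig j i (fst p j \<omega>) (snd p j \<omega>)
          (a1 *\<^sub>R fst q1 j \<omega> + a2 *\<^sub>R fst q2 j \<omega>, a1 *\<^sub>R snd q1 j \<omega> + a2 *\<^sub>R snd q2 j \<omega>))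
      = a1 *\<^sub>R (\<Sum>i\<in>UNIV. w (Suc j) \<omega> $ i *\<^sub>R Dsig j i (fst p j \<omega>) (snd p j \<omega>) (fst q1 j \<omega>, snd q1 j \<omega>))
        + a2 *\<^sub>R (\<Sum>i\<in>UNIV. w (Suc j) \<omega> $ i *\<^sub>R Dsig j i (fst p j \<omega>) (snd p j \<omega>) (fst q2 j \<omega>, snd q2 j \<omega>))"
    unfolding blinfun_apply_Pair_lincomb scaleR_add_right scaleR_sum_right sum.distrib
    by (simp add: mult.commute)
  then show ?thesis
    by (simp add: Suc dgmap_def plincomb_def lincomb_def blinfun_apply_Pair_lincomb algebra_simps)
qed

lemma dgmap_Suc_le:
  assumes p: "p \<in> Dom M w N" and q: "q \<in> Dom M w N" and j: "j < N"
  shows "L2norm M (dgmap w Db Dsig p q (Suc j))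
    \<le> (1 + real CARD('d)) * c * (L2norm M (fst q j) + L2norm M (snd q j)) + L2norm M (fst q (Suc j))"
proof -
  let ?D = "L2norm M (fst q j) + L2norm M (snd q j)"
  define B where "B = (\<lambda>\<omega>. Db j (fst p j \<omega>) (snd p j \<omega>) (fst q j \<omega>, snd q j \<omega>))"
  define S where "S = (\<lambda>i \<omega>. Dsig j i (fst p j \<omega>) (snd p j \<omega>) (fst q j \<omega>, snd q j \<omega>))"
  note DB = coefficient_deriv_L2[OF b[OF j] p q j, folded B_def]
  note DS = coefficient_deriv_L2[OF sig[OF j] p q j]
  have S: "S i \<in> L2 M (filt M w j)" for i
    unfolding S_def by (rule DS(1))
  have B: "B \<in> L2 M M"
    using L2_filt_M[OF DB(1)] j by simp
  have X: "fst q (Suc j) \<in> L2 M M"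
    using Dom_state(3)[OF q] j by simp
  have "L2norm M (dgmap w Db Dsig p q (Suc j)) = L2norm M (\<lambda>\<omega>. noise_comb j B S \<omega> - fst q (Suc j) \<omega>)"
    by (simp add: dgmap_Suc B_def S_def)
  also have "\<dots> \<le> L2norm M (noise_comb j B S) + L2norm M (fst q (Suc j))"
    by (rule L2_diff(2)[OF L2_noise_comb(1)[OF j B S] X])
  also have "L2norm M (noise_comb j B S) \<le> L2norm M B + (\<Sum>i\<in>UNIV. L2norm M (S i))"
    by (rule L2_noise_comb(2)[OF j B S])
  also have "L2norm M B \<le> c * ?D"
    by (rule DB(2))
  also have "(\<Sum>i\<in>UNIV. L2norm M (S i)) \<le> (\<Sum>i\<in>(UNIV::'d set). c * ?D)"
    by (rule sum_mono) (unfold S_def, rule DS(2))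
  finally show ?thesis by (simp add: algebra_simps)
qed

lemma normX_dgmap_le:
  assumes p: "p \<in> Dom M w N" and q: "q \<in> Dom M w N"
  shows "normX M N (dgmap w Db Dsig p q) \<le> ((1 + real CARD('d)) * c + 1) * normXU M N q"
  unfolding normX_def normXU_def
proof (rule sum_le_of_stepwise_bound[OF L2norm_nonneg L2norm_nonneg])
  show "0 \<le> (1 + real CARD('d)) * c" using c_nonneg by simp
  show "L2norm M (dgmap w Db Dsig p q 0) \<le> L2norm M (fst q 0)"
    by (simp add: dgmap_0)
qed (rule dgmap_Suc_le[OF p q])

lemma gmap_difference_quotient_Suc:
  assumes "t \<noteq> 0"
  shows "(1 / t) *\<^sub>R (1 *\<^sub>R gmap w x0h b sig (plincomb 1 p t q) (Suc j) \<omega> + (-1) *\<^sub>R gmap w x0h b sig p (Suc j) \<omega>)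
      + (-1) *\<^sub>R dgmap w Db Dsig p q (Suc j) \<omega>
    = noise_comb j
        (\<lambda>\<omega>. (b j (fst p j \<omega> + t *\<^sub>R fst q j \<omega>) (snd p j \<omega> + t *\<^sub>R snd q j \<omega>) - b j (fst p j \<omega>) (snd p j \<omega>)) /\<^sub>R t
          - Db j (fst p j \<omega>) (snd p j \<omega>) (fst q j \<omega>, snd q j \<omega>))
        (\<lambda>i \<omega>. (sig j i (fst p j \<omega> + t *\<^sub>R fst q j \<omega>) (snd p j \<omega> + t *\<^sub>R snd q j \<omega>) - sig j i (fst p j \<omega>) (snd p j \<omega>)) /\<^sub>R t
          - Dsig j i (fst p j \<omega>) (snd p j \<omega>) (fst q j \<omega>, snd q j \<omega>)) \<omega>"
  using assms
  by (simp add: gmap_def dgmap_def noise_comb_def plincomb_def lincomb_def divide_inverse scaleR_diff_right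
      scaleR_add_right scaleR_sum_right sum_subtractf sum_negf sum.distrib algebra_simps)

lemma gmap_difference_quotient_Suc_tendsto:
  assumes p: "p \<in> Dom M w N" and q: "q \<in> Dom M w N" and j: "j < N"
  shows "((\<lambda>t. L2norm M (\<lambda>\<omega>. (1 / t) *\<^sub>R (1 *\<^sub>R gmap w x0h b sig (plincomb 1 p t q) (Suc j) \<omega>
      + (-1) *\<^sub>R gmap w x0h b sig p (Suc j) \<omega>) + (-1) *\<^sub>R dgmap w Db Dsig p q (Suc j) \<omega>)) \<longlongrightarrow> 0) (at 0)"
proof -
  define QB where "QB = (\<lambda>t \<omega>. (b j (fst p j \<omega> + t *\<^sub>R fst q j \<omega>) (snd p j \<omega> + t *\<^sub>R snd q j \<omega>)
      - b j (fst p j \<omega>) (snd p j \<omega>)) /\<^sub>R t - Db j (fst p j \<omega>) (snd p j \<omega>) (fst q j \<omega>, snd q j \<omega>))"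
  define QS where "QS = (\<lambda>i t \<omega>. (sig j i (fst p j \<omega> + t *\<^sub>R fst q j \<omega>) (snd p j \<omega> + t *\<^sub>R snd q j \<omega>)
      - sig j i (fst p j \<omega>) (snd p j \<omega>)) /\<^sub>R t - Dsig j i (fst p j \<omega>) (snd p j \<omega>) (fst q j \<omega>, snd q j \<omega>))"
  note B = coefficient_quotient_L2[OF b[OF j] p q j]
  note S = coefficient_quotient_L2[OF sig[OF j] p q j]
  have QS: "QS i t \<in> L2 M (filt M w j)" "((\<lambda>t. L2norm M (QS i t)) \<longlongrightarrow> 0) (at 0)" for i t
    unfolding QS_def by (rule S(1), rule S(2))
  have QB_lim: "((\<lambda>t. L2norm M (QB t)) \<longlongrightarrow> 0) (at 0)"
    unfolding QB_def by (rule B(2))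
  have QB: "QB t \<in> L2 M M" for t
    using L2_filt_M[OF B(1)] j by (simp add: QB_def)
  have "((\<lambda>t. L2norm M (noise_comb j (QB t) (\<lambda>i. QS i t))) \<longlongrightarrow> 0) (at 0)"
  proof (rule tendsto_sandwich[OF _ _ tendsto_const])
    show "\<forall>\<^sub>F t in at 0. L2norm M (noise_comb j (QB t) (\<lambda>i. QS i t))
        \<le> L2norm M (QB t) + (\<Sum>i\<in>UNIV. L2norm M (QS i t))"
      using L2_noise_comb(2)[OF j QB QS(1)] by simp
    show "((\<lambda>t. L2norm M (QB t) + (\<Sum>i\<in>UNIV. L2norm M (QS i t))) \<longlongrightarrow> 0) (at 0)"
      using tendsto_add[OF QB_lim tendsto_null_sum[OF QS(2)]] by simp
  qed (simp add: L2norm_nonneg)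
  moreover have "\<forall>\<^sub>F t in at 0. L2norm M (noise_comb j (QB t) (\<lambda>i. QS i t))
      = L2norm M (\<lambda>\<omega>. (1 / t) *\<^sub>R (1 *\<^sub>R gmap w x0h b sig (plincomb 1 p t q) (Suc j) \<omega>
        + (-1) *\<^sub>R gmap w x0h b sig p (Suc j) \<omega>) + (-1) *\<^sub>R dgmap w Db Dsig p q (Suc j) \<omega>)"
    unfolding eventually_at_filter
    by (intro always_eventually allI impI) (simp only: gmap_difference_quotient_Suc QB_def QS_def not_False_eq_True)
  ultimately show ?thesis
    by (rule Lim_transform_eventually)
qed

lemma gmap_difference_quotient_tendsto:
  assumes p: "p \<in> Dom M w N" and q: "q \<in> Dom M w N"
  shows "((\<lambda>t. normX M N (lincomb (1 / t) (lincomb 1 (gmap w x0h b sig (plincomb 1 p t q)) (-1) (gmap w x0h b sig p))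
            (-1) (dgmap w Db Dsig p q))) \<longlongrightarrow> 0) (at 0)"
  unfolding normX_def lincomb_def
proof (rule tendsto_null_sum)
  fix k assume k: "k \<in> {..N}"
  show "((\<lambda>t. L2norm M (\<lambda>\<omega>. (1 / t) *\<^sub>R (1 *\<^sub>R gmap w x0h b sig (plincomb 1 p t q) k \<omega> + (-1) *\<^sub>R gmap w x0h b sig p k \<omega>)
      + (-1) *\<^sub>R dgmap w Db Dsig p q k \<omega>)) \<longlongrightarrow> 0) (at 0)"
  proof (cases k)
    case 0
    have "\<forall>\<^sub>F t in at 0. L2norm M (\<lambda>\<omega>. (1 / t) *\<^sub>R (1 *\<^sub>R gmap w x0h b sig (plincomb 1 p t q) 0 \<omega>
        + (-1) *\<^sub>R gmap w x0h b sig p 0 \<omega>) + (-1) *\<^sub>R dgmap w Db Dsig p q 0 \<omega>) = 0"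
      unfolding eventually_at_filter
      by (intro always_eventually allI impI)
        (simp add: gmap_0 dgmap_0 plincomb_def lincomb_def L2norm_def algebra_simps)
    then show ?thesis unfolding 0 by (rule tendsto_eventually)
  next
    case (Suc j)
    with k gmap_difference_quotient_Suc_tendsto[OF p q, of j] show ?thesis by simp
  qed
qed

lemma gateaux_deriv_gmap:
  assumes p: "p \<in> Dom M w N"
  shows "gateaux_deriv_G M w N (gmap w x0h b sig) (dgmap w Db Dsig p) p"
  unfolding gateaux_deriv_G_def
proof (intro conjI ballI allI impI exI)
  show "dgmap w Db Dsig p q k \<in> Xsp M w k" if "q \<in> Dom M w N" "k \<le> N" for q k
    by (rule dgmap_in_Xsp[OF p that])
  show "normX M N (lincomb 1 (dgmap w Db Dsig p (plincomb a q1 a' q2)) (-1)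
      (lincomb a (dgmap w Db Dsig p q1) a' (dgmap w Db Dsig p q2))) = 0" for q1 q2 a a'
    by (simp add: normX_def lincomb_def dgmap_plincomb L2norm_def)
  show "normX M N (dgmap w Db Dsig p q) \<le> ((1 + real CARD('d)) * c + 1) * normXU M N q"
    if "q \<in> Dom M w N" for q
    by (rule normX_dgmap_le[OF p that])
  show "((\<lambda>t. normX M N (lincomb (1 / t) (lincomb 1 (gmap w x0h b sig (plincomb 1 p t q)) (-1)
      (gmap w x0h b sig p)) (-1) (dgmap w Db Dsig p q))) \<longlongrightarrow> 0) (at 0)" if "q \<in> Dom M w N" for q
    by (rule gmap_difference_quotient_tendsto[OF p that])
qed

lemma integrable_ell:
  assumes "p \<in> Dom M w N" "k < N"
  shows "integrable M (\<lambda>\<omega>. ell k (fst p k \<omega>) (snd p k \<omega>))"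
  using C1_quadratic_growth.integrable_comp[OF ell[OF assms(2)] prob_space_axioms
      Dom_state_control(2)[OF assms]]
  by simp

lemma integrable_Phi:
  assumes "p \<in> Dom M w N"
  shows "integrable M (\<lambda>\<omega>. Phi (fst p N \<omega>))"
  using C1_quadratic_growth.integrable_comp[OF Phi prob_space_axioms Dom_state(3)[OF assms order_refl]] .

lemma integrable_Dell:
  assumes "p \<in> Dom M w N" "q \<in> Dom M w N" "k < N"
  shows "integrable M (\<lambda>\<omega>. Dell k (fst p k \<omega>) (snd p k \<omega>) (fst q k \<omega>, snd q k \<omega>))"
  using C1_quadratic_growth.integrable_DF_apply(1)[OF ell[OF assms(3)] prob_space_axioms
      Dom_state_control(2)[OF assms(1,3)] Dom_state_control(2)[OF assms(2,3)]]
  by simp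

lemma integrable_DPhi:
  assumes "p \<in> Dom M w N" "q \<in> Dom M w N"
  shows "integrable M (\<lambda>\<omega>. DPhi (fst p N \<omega>) (fst q N \<omega>))"
  using C1_quadratic_growth.integrable_DF_apply(1)[OF Phi prob_space_axioms
      Dom_state(3)[OF assms(1) order_refl] Dom_state(3)[OF assms(2) order_refl]] .

lemma fmap_eq_sum:
  assumes p: "p \<in> Dom M w N"
  shows "fmap M N ell Phi p = (\<Sum>k<N. \<integral>\<omega>. ell k (fst p k \<omega>) (snd p k \<omega>) \<partial>M) + (\<integral>\<omega>. Phi (fst p N \<omega>) \<partial>M)"
proof -
  have "integrable M (\<lambda>\<omega>. \<Sum>k<N. ell k (fst p k \<omega>) (snd p k \<omega>))"
    using integrable_ell[OF p] by (intro Bochner_Integration.integrable_sum) simp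
  then have "fmap M N ell Phi p
      = (\<integral>\<omega>. (\<Sum>k<N. ell k (fst p k \<omega>) (snd p k \<omega>)) \<partial>M) + (\<integral>\<omega>. Phi (fst p N \<omega>) \<partial>M)"
    unfolding fmap_def by (rule Bochner_Integration.integral_add[OF _ integrable_Phi[OF p]])
  also have "(\<integral>\<omega>. (\<Sum>k<N. ell k (fst p k \<omega>) (snd p k \<omega>)) \<partial>M)
      = (\<Sum>k<N. \<integral>\<omega>. ell k (fst p k \<omega>) (snd p k \<omega>) \<partial>M)"
    using integrable_ell[OF p] by (intro Bochner_Integration.integral_sum) simp
  finally show ?thesis .
qed

lemma integrable_dfmap_integrand:
  assumes p: "p \<in> Dom M w N" and q: "q \<in> Dom M w N"
  shows "integrable M (\<lambda>\<omega>. (\<Sum>k<N. Dell k (fst p k \<omega>) (snd p k \<omega>) (fst q k \<omega>, snd q k \<omega>))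
      + DPhi (fst p N \<omega>) (fst q N \<omega>))"
  using integrable_Dell[OF p q] integrable_DPhi[OF p q]
  by (intro Bochner_Integration.integrable_add Bochner_Integration.integrable_sum) simp_all

lemma dfmap_eq_sum:
  assumes p: "p \<in> Dom M w N" and q: "q \<in> Dom M w N"
  shows "dfmap M N Dell DPhi p q = (\<Sum>k<N. \<integral>\<omega>. Dell k (fst p k \<omega>) (snd p k \<omega>) (fst q k \<omega>, snd q k \<omega>) \<partial>M)
      + (\<integral>\<omega>. DPhi (fst p N \<omega>) (fst q N \<omega>) \<partial>M)"
proof -
  have "integrable M (\<lambda>\<omega>. \<Sum>k<N. Dell k (fst p k \<omega>) (snd p k \<omega>) (fst q k \<omega>, snd q k \<omega>))"
    using integrable_Dell[OF p q] by (intro Bochner_Integration.integrable_sum) simp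
  then have "dfmap M N Dell DPhi p q
      = (\<integral>\<omega>. (\<Sum>k<N. Dell k (fst p k \<omega>) (snd p k \<omega>) (fst q k \<omega>, snd q k \<omega>)) \<partial>M)
        + (\<integral>\<omega>. DPhi (fst p N \<omega>) (fst q N \<omega>) \<partial>M)"
    unfolding dfmap_def by (rule Bochner_Integration.integral_add[OF _ integrable_DPhi[OF p q]])
  also have "(\<integral>\<omega>. (\<Sum>k<N. Dell k (fst p k \<omega>) (snd p k \<omega>) (fst q k \<omega>, snd q k \<omega>)) \<partial>M)
      = (\<Sum>k<N. \<integral>\<omega>. Dell k (fst p k \<omega>) (snd p k \<omega>) (fst q k \<omega>, snd q k \<omega>) \<partial>M)"
    using integrable_Dell[OF p q] by (intro Bochner_Integration.integral_sum) simp
  finally show ?thesis .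
qed

lemma normXU_triangle:
  assumes p: "p \<in> Dom M w N" and q: "q \<in> Dom M w N"
  shows "normXU M N q \<le> normXU M N p + normXU M N (plincomb 1 q (-1) p)"
proof -
  have x: "L2norm M (fst q k) \<le> L2norm M (fst p k) + L2norm M (\<lambda>\<omega>. fst q k \<omega> - fst p k \<omega>)" if "k \<le> N" for k
    using L2_add(2)[OF Dom_state(3)[OF p that] L2_diff(1)[OF Dom_state(3)[OF q that] Dom_state(3)[OF p that]]]
    by simp
  have u: "L2norm M (snd q k) \<le> L2norm M (snd p k) + L2norm M (\<lambda>\<omega>. snd q k \<omega> - snd p k \<omega>)" if "k < N" for k
    using L2_add(2)[OF Dom_control(2)[OF p that] L2_diff(1)[OF Dom_control(2)[OF q that] Dom_control(2)[OF p that]]]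
    by simp
  have "(\<Sum>k\<le>N. L2norm M (fst q k)) \<le> (\<Sum>k\<le>N. L2norm M (fst p k) + L2norm M (\<lambda>\<omega>. fst q k \<omega> - fst p k \<omega>))"
    using x by (intro sum_mono) simp
  moreover have "(\<Sum>k<N. L2norm M (snd q k)) \<le> (\<Sum>k<N. L2norm M (snd p k) + L2norm M (\<lambda>\<omega>. snd q k \<omega> - snd p k \<omega>))"
    using u by (intro sum_mono) simp
  ultimately show ?thesis
    unfolding normXU_diff by (simp add: normXU_def sum.distrib)
qed

lemma integral_ell_diff_le:
  assumes q1: "q1 \<in> Dom M w N" and q2: "q2 \<in> Dom M w N" and k: "k < N"
    and R: "normXU M N q1 \<le> R" "normXU M N q2 \<le> R"
  shows "\<bar>(\<integral>\<omega>. ell k (fst q1 k \<omega>) (snd q1 k \<omega>) \<partial>M) - (\<integral>\<omega>. ell k (fst q2 k \<omega>) (snd q2 k \<omega>) \<partial>M)\<bar>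
    \<le> K * (1 + 2 * R) * (L2norm M (\<lambda>\<omega>. fst q1 k \<omega> - fst q2 k \<omega>) + L2norm M (\<lambda>\<omega>. snd q1 k \<omega> - snd q2 k \<omega>))"
proof -
  note a1 = Dom_state_control[OF q1 k] and a2 = Dom_state_control[OF q2 k]
  have "\<bar>(\<integral>\<omega>. ell k (fst q1 k \<omega>) (snd q1 k \<omega>) \<partial>M) - (\<integral>\<omega>. ell k (fst q2 k \<omega>) (snd q2 k \<omega>) \<partial>M)\<bar>
    \<le> K * ((1 + L2norm M (\<lambda>\<omega>. (fst q1 k \<omega>, snd q1 k \<omega>)) + L2norm M (\<lambda>\<omega>. (fst q2 k \<omega>, snd q2 k \<omega>)))
           * L2norm M (\<lambda>\<omega>. (fst q1 k \<omega>, snd q1 k \<omega>) - (fst q2 k \<omega>, snd q2 k \<omega>)))"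
    using C1_quadratic_growth.integral_comp_diff_le[OF ell[OF k] prob_space_axioms a1(2) a2(2)] by simp
  also have "\<dots> \<le> K * ((1 + 2 * R)
      * (L2norm M (\<lambda>\<omega>. fst q1 k \<omega> - fst q2 k \<omega>) + L2norm M (\<lambda>\<omega>. snd q1 k \<omega> - snd q2 k \<omega>)))"
  proof (rule mult_left_mono[OF mult_mono K_nonneg])
    show "1 + L2norm M (\<lambda>\<omega>. (fst q1 k \<omega>, snd q1 k \<omega>)) + L2norm M (\<lambda>\<omega>. (fst q2 k \<omega>, snd q2 k \<omega>)) \<le> 1 + 2 * R"
      using a1(3) a2(3) R by simp
    show "0 \<le> 1 + 2 * R" using normXU_nonneg[of q1] R by simp
  qed (rule Dom_state_control_diff[OF q1 q2 k], rule L2norm_nonneg)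
  finally show ?thesis by (simp add: mult.assoc)
qed

lemma integral_Phi_diff_le:
  assumes q1: "q1 \<in> Dom M w N" and q2: "q2 \<in> Dom M w N"
    and R: "normXU M N q1 \<le> R" "normXU M N q2 \<le> R"
  shows "\<bar>(\<integral>\<omega>. Phi (fst q1 N \<omega>) \<partial>M) - (\<integral>\<omega>. Phi (fst q2 N \<omega>) \<partial>M)\<bar>
    \<le> K * (1 + 2 * R) * L2norm M (\<lambda>\<omega>. fst q1 N \<omega> - fst q2 N \<omega>)"
proof -
  have "\<bar>(\<integral>\<omega>. Phi (fst q1 N \<omega>) \<partial>M) - (\<integral>\<omega>. Phi (fst q2 N \<omega>) \<partial>M)\<bar>
      \<le> K * ((1 + L2norm M (fst q1 N) + L2norm M (fst q2 N)) * L2norm M (\<lambda>\<omega>. fst q1 N \<omega> - fst q2 N \<omega>))"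
    by (rule C1_quadratic_growth.integral_comp_diff_le[OF Phi prob_space_axioms
          Dom_state(3)[OF q1 order_refl] Dom_state(3)[OF q2 order_refl]])
  also have "\<dots> \<le> K * ((1 + 2 * R) * L2norm M (\<lambda>\<omega>. fst q1 N \<omega> - fst q2 N \<omega>))"
  proof (rule mult_left_mono[OF mult_right_mono K_nonneg])
    show "1 + L2norm M (fst q1 N) + L2norm M (fst q2 N) \<le> 1 + 2 * R"
      using L2norm_le_normXU(1)[of N q1] L2norm_le_normXU(1)[of N q2] R by simp
  qed (rule L2norm_nonneg)
  finally show ?thesis by (simp add: mult.assoc)
qed

lemma fmap_diff_le:
  assumes q1: "q1 \<in> Dom M w N" and q2: "q2 \<in> Dom M w N"
    and R: "normXU M N q1 \<le> R" "normXU M N q2 \<le> R"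
  shows "\<bar>fmap M N ell Phi q1 - fmap M N ell Phi q2\<bar> \<le> K * (1 + 2 * R) * normXU M N (plincomb 1 q1 (-1) q2)"
proof -
  let ?C = "K * (1 + 2 * R)"
  let ?dx = "\<lambda>k. L2norm M (\<lambda>\<omega>. fst q1 k \<omega> - fst q2 k \<omega>)" and ?du = "\<lambda>k. L2norm M (\<lambda>\<omega>. snd q1 k \<omega> - snd q2 k \<omega>)"
  have eq: "fmap M N ell Phi q1 - fmap M N ell Phi q2
      = (\<Sum>k<N. (\<integral>\<omega>. ell k (fst q1 k \<omega>) (snd q1 k \<omega>) \<partial>M) - (\<integral>\<omega>. ell k (fst q2 k \<omega>) (snd q2 k \<omega>) \<partial>M))
        + ((\<integral>\<omega>. Phi (fst q1 N \<omega>) \<partial>M) - (\<integral>\<omega>. Phi (fst q2 N \<omega>) \<partial>M))"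
    unfolding fmap_eq_sum[OF q1] fmap_eq_sum[OF q2] by (simp add: sum_subtractf)
  have "\<bar>fmap M N ell Phi q1 - fmap M N ell Phi q2\<bar>
      \<le> (\<Sum>k<N. \<bar>(\<integral>\<omega>. ell k (fst q1 k \<omega>) (snd q1 k \<omega>) \<partial>M) - (\<integral>\<omega>. ell k (fst q2 k \<omega>) (snd q2 k \<omega>) \<partial>M)\<bar>)
        + \<bar>(\<integral>\<omega>. Phi (fst q1 N \<omega>) \<partial>M) - (\<integral>\<omega>. Phi (fst q2 N \<omega>) \<partial>M)\<bar>"
    unfolding eq by (rule order_trans[OF abs_triangle_ineq add_right_mono[OF sum_abs]])
  also have "\<dots> \<le> (\<Sum>k<N. ?C * (?dx k + ?du k)) + ?C * ?dx N"
    using integral_ell_diff_le[OF q1 q2 _ R] integral_Phi_diff_le[OF q1 q2 R]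
    by (intro add_mono sum_mono) simp_all
  also have "\<dots> = ?C * normXU M N (plincomb 1 q1 (-1) q2)"
    by (simp add: normXU_diff lessThan_Suc_atMost[symmetric] sum_distrib_left sum.distrib algebra_simps)
  finally show ?thesis .
qed

lemma loc_lipschitz_fmap: "loc_lipschitz_F M w N (fmap M N ell Phi)"
  unfolding loc_lipschitz_F_def
proof (intro ballI exI conjI impI)
  fix p q1 q2 :: "(nat \<Rightarrow> 'a \<Rightarrow> real^'n) \<times> (nat \<Rightarrow> 'a \<Rightarrow> real^'m)"
  assume p: "p \<in> Dom M w N" and q1: "q1 \<in> Dom M w N" and q2: "q2 \<in> Dom M w N"
    and near: "normXU M N (plincomb 1 q1 (-1) p) < 1 \<and> normXU M N (plincomb 1 q2 (-1) p) < 1"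
  show "\<bar>fmap M N ell Phi q1 - fmap M N ell Phi q2\<bar>
      \<le> K * (1 + 2 * (normXU M N p + 1)) * normXU M N (plincomb 1 q1 (-1) q2)"
    using normXU_triangle[OF p q1] normXU_triangle[OF p q2] near
    by (intro fmap_diff_le[OF q1 q2]) auto
qed (rule zero_less_one)

lemma dfmap_plincomb:
  assumes p: "p \<in> Dom M w N" and q1: "q1 \<in> Dom M w N" and q2: "q2 \<in> Dom M w N"
  shows "dfmap M N Dell DPhi p (plincomb a1 q1 a2 q2) = a1 * dfmap M N Dell DPhi p q1 + a2 * dfmap M N Dell DPhi p q2"
proof -
  let ?I = "\<lambda>q \<omega>. (\<Sum>k<N. Dell k (fst p k \<omega>) (snd p k \<omega>) (fst q k \<omega>, snd q k \<omega>)) + DPhi (fst p N \<omega>) (fst q N \<omega>)"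
  have "?I (plincomb a1 q1 a2 q2) \<omega> = a1 * ?I q1 \<omega> + a2 * ?I q2 \<omega>" for \<omega>
    by (simp add: plincomb_def lincomb_def blinfun_apply_Pair_lincomb blinfun.add_right
        blinfun.scaleR_right sum.distrib sum_distrib_left algebra_simps)
  then have "dfmap M N Dell DPhi p (plincomb a1 q1 a2 q2) = (\<integral>\<omega>. a1 * ?I q1 \<omega> + a2 * ?I q2 \<omega> \<partial>M)"
    by (simp add: dfmap_def)
  also have "\<dots> = a1 * (\<integral>\<omega>. ?I q1 \<omega> \<partial>M) + a2 * (\<integral>\<omega>. ?I q2 \<omega> \<partial>M)"
    using integrable_dfmap_integrand[OF p q1] integrable_dfmap_integrand[OF p q2] by simp
  finally show ?thesis by (simp add: dfmap_def)
qed

lemma integral_Dell_le: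
  assumes p: "p \<in> Dom M w N" and q: "q \<in> Dom M w N" and k: "k < N"
  shows "\<bar>\<integral>\<omega>. Dell k (fst p k \<omega>) (snd p k \<omega>) (fst q k \<omega>, snd q k \<omega>) \<partial>M\<bar>
    \<le> K * (1 + normXU M N p) * (L2norm M (fst q k) + L2norm M (snd q k))"
proof -
  note a = Dom_state_control[OF p k] and h = Dom_state_control[OF q k]
  have "\<bar>\<integral>\<omega>. Dell k (fst p k \<omega>) (snd p k \<omega>) (fst q k \<omega>, snd q k \<omega>) \<partial>M\<bar>
      \<le> K * ((1 + L2norm M (\<lambda>\<omega>. (fst p k \<omega>, snd p k \<omega>))) * L2norm M (\<lambda>\<omega>. (fst q k \<omega>, snd q k \<omega>)))"
    using C1_quadratic_growth.integrable_DF_apply(2)[OF ell[OF k] prob_space_axioms a(2) h(2)] by simp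
  also have "\<dots> \<le> K * ((1 + normXU M N p) * (L2norm M (fst q k) + L2norm M (snd q k)))"
  proof (rule mult_left_mono[OF mult_mono K_nonneg])
    show "1 + L2norm M (\<lambda>\<omega>. (fst p k \<omega>, snd p k \<omega>)) \<le> 1 + normXU M N p"
      using a(3) by simp
    show "0 \<le> 1 + normXU M N p" using normXU_nonneg[of p] by simp
    show "L2norm M (\<lambda>\<omega>. (fst q k \<omega>, snd q k \<omega>)) \<le> L2norm M (fst q k) + L2norm M (snd q k)"
      using k by (intro L2_Pair(2) Dom_state(3)[OF q] Dom_control(2)[OF q]) simp_all
  qed (rule L2norm_nonneg)
  finally show ?thesis by (simp add: mult.assoc)
qed

lemma integral_DPhi_le:
  assumes p: "p \<in> Dom M w N" and q: "q \<in> Dom M w N"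
  shows "\<bar>\<integral>\<omega>. DPhi (fst p N \<omega>) (fst q N \<omega>) \<partial>M\<bar> \<le> K * (1 + normXU M N p) * L2norm M (fst q N)"
proof -
  have "\<bar>\<integral>\<omega>. DPhi (fst p N \<omega>) (fst q N \<omega>) \<partial>M\<bar> \<le> K * ((1 + L2norm M (fst p N)) * L2norm M (fst q N))"
    by (rule C1_quadratic_growth.integrable_DF_apply(2)[OF Phi prob_space_axioms
          Dom_state(3)[OF p order_refl] Dom_state(3)[OF q order_refl]])
  also have "\<dots> \<le> K * ((1 + normXU M N p) * L2norm M (fst q N))"
  proof (rule mult_left_mono[OF mult_right_mono K_nonneg])
    show "1 + L2norm M (fst p N) \<le> 1 + normXU M N p"
      using L2norm_le_normXU(1)[of N p] by simp
  qed (rule L2norm_nonneg)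
  finally show ?thesis by (simp add: mult.assoc)
qed

lemma dfmap_bounded:
  assumes p: "p \<in> Dom M w N" and q: "q \<in> Dom M w N"
  shows "\<bar>dfmap M N Dell DPhi p q\<bar> \<le> K * (1 + normXU M N p) * normXU M N q"
proof -
  define C where "C = K * (1 + normXU M N p)"
  have "\<bar>dfmap M N Dell DPhi p q\<bar>
      \<le> (\<Sum>k<N. \<bar>\<integral>\<omega>. Dell k (fst p k \<omega>) (snd p k \<omega>) (fst q k \<omega>, snd q k \<omega>) \<partial>M\<bar>)
        + \<bar>\<integral>\<omega>. DPhi (fst p N \<omega>) (fst q N \<omega>) \<partial>M\<bar>"
    unfolding dfmap_eq_sum[OF p q]
    by (rule order_trans[OF abs_triangle_ineq add_right_mono[OF sum_abs]])
  also have "\<dots> \<le> (\<Sum>k<N. C * (L2norm M (fst q k) + L2norm M (snd q k))) + C * L2norm M (fst q N)"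
    using integral_Dell_le[OF p q] integral_DPhi_le[OF p q]
    by (intro add_mono sum_mono) (simp_all add: C_def)
  also have "\<dots> = C * normXU M N q"
    by (simp add: normXU_def lessThan_Suc_atMost[symmetric] sum_distrib_left sum.distrib algebra_simps)
  finally show ?thesis by (simp add: C_def)
qed

lemma fmap_difference_quotient_tendsto:
  assumes p: "p \<in> Dom M w N" and q: "q \<in> Dom M w N"
  shows "((\<lambda>t. (fmap M N ell Phi (plincomb 1 p t q) - fmap M N ell Phi p) / t) \<longlongrightarrow> dfmap M N Dell DPhi p q) (at 0)"
proof -
  have ell_lim: "((\<lambda>t. ((\<integral>\<omega>. ell k (fst p k \<omega> + t *\<^sub>R fst q k \<omega>) (snd p k \<omega> + t *\<^sub>R snd q k \<omega>) \<partial>M)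
        - (\<integral>\<omega>. ell k (fst p k \<omega>) (snd p k \<omega>) \<partial>M)) / t)
      \<longlongrightarrow> (\<integral>\<omega>. Dell k (fst p k \<omega>) (snd p k \<omega>) (fst q k \<omega>, snd q k \<omega>) \<partial>M)) (at 0)"
    if k: "k < N" for k
    using C1_quadratic_growth.integral_difference_quotient_tendsto[OF ell[OF k] prob_space_axioms
        Dom_state_control(2)[OF p k] Dom_state_control(2)[OF q k]]
    by simp
  have Phi_lim: "((\<lambda>t. ((\<integral>\<omega>. Phi (fst p N \<omega> + t *\<^sub>R fst q N \<omega>) \<partial>M) - (\<integral>\<omega>. Phi (fst p N \<omega>) \<partial>M)) / t)
      \<longlongrightarrow> (\<integral>\<omega>. DPhi (fst p N \<omega>) (fst q N \<omega>) \<partial>M)) (at 0)"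
    by (rule C1_quadratic_growth.integral_difference_quotient_tendsto[OF Phi prob_space_axioms
          Dom_state(3)[OF p order_refl] Dom_state(3)[OF q order_refl]])
  have "(fmap M N ell Phi (plincomb 1 p t q) - fmap M N ell Phi p) / t
      = (\<Sum>k<N. ((\<integral>\<omega>. ell k (fst p k \<omega> + t *\<^sub>R fst q k \<omega>) (snd p k \<omega> + t *\<^sub>R snd q k \<omega>) \<partial>M)
          - (\<integral>\<omega>. ell k (fst p k \<omega>) (snd p k \<omega>) \<partial>M)) / t)
        + ((\<integral>\<omega>. Phi (fst p N \<omega> + t *\<^sub>R fst q N \<omega>) \<partial>M) - (\<integral>\<omega>. Phi (fst p N \<omega>) \<partial>M)) / t" for t
    unfolding fmap_eq_sum[OF Dom_plincomb[OF p q]] fmap_eq_sum[OF p]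
    by (simp add: plincomb_def lincomb_def sum_subtractf sum_divide_distrib[symmetric] diff_divide_distrib
        add_divide_distrib)
  then show ?thesis
    unfolding dfmap_eq_sum[OF p q] by (simp only:) (intro tendsto_add tendsto_sum ell_lim Phi_lim, simp)
qed

lemma gateaux_deriv_fmap:
  assumes p: "p \<in> Dom M w N"
  shows "gateaux_deriv_F M w N (fmap M N ell Phi) (dfmap M N Dell DPhi p) p"
  unfolding gateaux_deriv_F_def
proof (intro conjI ballI allI exI)
  show "dfmap M N Dell DPhi p (plincomb a q1 a' q2) = a * dfmap M N Dell DPhi p q1 + a' * dfmap M N Dell DPhi p q2"
    if "q1 \<in> Dom M w N" "q2 \<in> Dom M w N" for q1 q2 a a'
    by (rule dfmap_plincomb[OF p that])
  show "\<bar>dfmap M N Dell DPhi p q\<bar> \<le> K * (1 + normXU M N p) * normXU M N q" if "q \<in> Dom M w N" for q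
    by (rule dfmap_bounded[OF p that])
  show "((\<lambda>t. (fmap M N ell Phi (plincomb 1 p t q) - fmap M N ell Phi p) / t) \<longlongrightarrow> dfmap M N Dell DPhi p q) (at 0)"
    if "q \<in> Dom M w N" for q
    by (rule fmap_difference_quotient_tendsto[OF p that])
qed

end

theorem lemma6p2:
  fixes M :: "'a measure" and w :: "nat \<Rightarrow> 'a \<Rightarrow> real^'d" and N :: nat
    and b :: "nat \<Rightarrow> real^'n \<Rightarrow> real^'m \<Rightarrow> real^'n"
    and Db :: "nat \<Rightarrow> real^'n \<Rightarrow> real^'m \<Rightarrow> ((real^'n) \<times> (real^'m)) \<Rightarrow>\<^sub>L (real^'n)"
    and sig :: "nat \<Rightarrow> 'd \<Rightarrow> real^'n \<Rightarrow> real^'m \<Rightarrow> real^'n"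
    and Dsig :: "nat \<Rightarrow> 'd \<Rightarrow> real^'n \<Rightarrow> real^'m \<Rightarrow> ((real^'n) \<times> (real^'m)) \<Rightarrow>\<^sub>L (real^'n)"
    and ell :: "nat \<Rightarrow> real^'n \<Rightarrow> real^'m \<Rightarrow> real"
    and Dell :: "nat \<Rightarrow> real^'n \<Rightarrow> real^'m \<Rightarrow> ((real^'n) \<times> (real^'m)) \<Rightarrow>\<^sub>L real"
    and Phi :: "real^'n \<Rightarrow> real" and DPhi :: "real^'n \<Rightarrow> (real^'n) \<Rightarrow>\<^sub>L real"
    and x0h :: "real^'n" and c1 c2 :: real
  assumes P: "prob_space M"
    and w0: "w 0 = (\<lambda>\<omega>. 0)"
    and w_meas: "\<forall>k\<in>{1..N}. w k \<in> borel_measurable M"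
    and w_indep: "prob_space.indep_vars M (\<lambda>_. borel) w {1..N}"
    and w_coord_indep: "\<forall>k\<in>{1..N}. prob_space.indep_vars M (\<lambda>_. borel) (\<lambda>i \<omega>. w k \<omega> $ i) UNIV"
    and w_moments: "\<forall>k\<in>{1..N}. \<forall>i. integrable M (\<lambda>\<omega>. w k \<omega> $ i) \<and> integrable M (\<lambda>\<omega>. (w k \<omega> $ i)\<^sup>2)
        \<and> (\<integral>\<omega>. w k \<omega> $ i \<partial>M) = 0 \<and> (\<integral>\<omega>. (w k \<omega> $ i)\<^sup>2 \<partial>M) = 1"
    and c_pos: "c1 > 0" "c2 > 0"
    and b_deriv: "\<forall>k<N. \<forall>x u. ((\<lambda>p. b k (fst p) (snd p)) has_derivative blinfun_apply (Db k x u)) (at (x, u))"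
    and b_C1: "\<forall>k<N. continuous_on UNIV (\<lambda>p. Db k (fst p) (snd p))"
    and b_growth: "\<forall>k<N. \<forall>x u. norm (b k x u) \<le> c1 * (1 + norm x + norm u)"
    and b_dbound: "\<forall>k<N. \<forall>x u. onorm (\<lambda>z. blinfun_apply (Db k x u) (z, 0))
                               + onorm (\<lambda>v. blinfun_apply (Db k x u) (0, v)) \<le> c1"
    and sig_deriv: "\<forall>k<N. \<forall>j x u. ((\<lambda>p. sig k j (fst p) (snd p)) has_derivative blinfun_apply (Dsig k j x u)) (at (x, u))"
    and sig_C1: "\<forall>k<N. \<forall>j. continuous_on UNIV (\<lambda>p. Dsig k j (fst p) (snd p))"
    and sig_growth: "\<forall>k<N. \<forall>j x u. norm (sig k j x u) \<le> c1 * (1 + norm x + norm u)"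
    and sig_dbound: "\<forall>k<N. \<forall>j x u. onorm (\<lambda>z. blinfun_apply (Dsig k j x u) (z, 0))
                               + onorm (\<lambda>v. blinfun_apply (Dsig k j x u) (0, v)) \<le> c1"
    and ell_deriv: "\<forall>k<N. \<forall>x u. ((\<lambda>p. ell k (fst p) (snd p)) has_derivative blinfun_apply (Dell k x u)) (at (x, u))"
    and ell_C1: "\<forall>k<N. continuous_on UNIV (\<lambda>p. Dell k (fst p) (snd p))"
    and ell_growth: "\<forall>k<N. \<forall>x u. \<bar>ell k x u\<bar> \<le> c2 * (1 + norm x + norm u)\<^sup>2"
    and ell_dbound: "\<forall>k<N. \<forall>x u. onorm (\<lambda>z. blinfun_apply (Dell k x u) (z, 0))
                               + onorm (\<lambda>v. blinfun_apply (Dell k x u) (0, v)) \<le> c2 * (1 + norm x + norm u)"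
    and Phi_deriv: "\<forall>x. (Phi has_derivative blinfun_apply (DPhi x)) (at x)"
    and Phi_C1: "continuous_on UNIV DPhi"
    and Phi_growth: "\<forall>x. \<bar>Phi x\<bar> \<le> c2 * (1 + norm x)\<^sup>2"
    and Phi_dbound: "\<forall>x. norm (DPhi x) \<le> c2 * (1 + norm x)"
  shows "(\<forall>p\<in>Dom M w N. \<forall>k\<le>N. gmap w x0h b sig p k \<in> Xsp M w k)
       \<and> lipschitz_G M w N (gmap w x0h b sig)
       \<and> (\<forall>p\<in>Dom M w N. gateaux_deriv_G M w N (gmap w x0h b sig) (dgmap w Db Dsig p) p)
       \<and> loc_lipschitz_F M w N (fmap M N ell Phi)
       \<and> (\<forall>p\<in>Dom M w N. gateaux_deriv_F M w N (fmap M N ell Phi) (dfmap M N Dell DPhi p) p)"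
proof -
  have noise: "driving_noise M w N"
  proof (rule driving_noise.intro[OF P driving_noise_axioms.intro])
    fix k i assume "k \<in> {1..N}"
    then show "w k \<in> borel_measurable M" and "integrable M (\<lambda>\<omega>. (w k \<omega> $ i)\<^sup>2)"
      and "(\<integral>\<omega>. (w k \<omega> $ i)\<^sup>2 \<partial>M) = 1"
      using w_meas w_moments by auto
  qed (rule w0, rule w_indep)
  have Phi: "C1_quadratic_growth Phi DPhi c2"
    by unfold_locales (use Phi_deriv Phi_C1 Phi_dbound Phi_growth in auto)
  interpret control_problem M w N b Db sig Dsig ell Dell Phi DPhi c1 "4 * c2"
  proof (rule control_problem.intro[OF noise control_problem_axioms.intro])
    show "0 \<le> c1" using c_pos by simp
    show "C1_bounded_deriv (\<lambda>p. b k (fst p) (snd p)) (\<lambda>p. Db k (fst p) (snd p)) c1" if "k < N" for k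
      using that b_deriv b_C1 b_dbound by (intro C1_bounded_deriv_of_partials) auto
    show "C1_bounded_deriv (\<lambda>p. sig k i (fst p) (snd p)) (\<lambda>p. Dsig k i (fst p) (snd p)) c1" if "k < N" for k i
      using that sig_deriv sig_C1 sig_dbound by (intro C1_bounded_deriv_of_partials) auto
    show "C1_quadratic_growth (\<lambda>p. ell k (fst p) (snd p)) (\<lambda>p. Dell k (fst p) (snd p)) (4 * c2)"
      if "k < N" for k
      using that ell_deriv ell_C1 ell_dbound ell_growth by (intro C1_quadratic_growth_of_partials) auto
    show "C1_quadratic_growth Phi DPhi (4 * c2)"
      by (rule C1_quadratic_growth_mono[OF Phi]) (use c_pos in simp)
  qed
  show ?thesis
    using gmap_in_Xsp lipschitz_gmap gateaux_deriv_gmap loc_lipschitz_fmap gateaux_deriv_fmap by blast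
qed

end
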